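(* Let $v\in\mathbb{Z}^d$ be primitive and $p$ a prime. Let $h\in H_v(\mathbb{Q}_p)\cap\mathrm{SO}_d(\mathbb{Z}_p)\mathrm{SO}_d(\mathbb{Z}[1/p])$, and write $h=c_1\gamma_1$ with $c_1\in\mathrm{SO}_d(\mathbb{Z}_p)$, $\gamma_1\in\mathrm{SO}_d(\mathbb{Z}[1/p])$, and $g_v^{-1}hg_v=c_2\gamma_2^{-1}$ with $c_2\in\mathrm{ASL}_{d-1}(\mathbb{Z}_p)$, $\gamma_2\in\mathrm{ASL}_{d-1}(\mathbb{Z}[1/p])$. Let $\Lambda$ be the $\mathbb{Z}$-span of the first $d-1$ columns of $\gamma_1g_v\gamma_2$. Then $\gamma_1v$ is a primitive integer vector, $\Lambda=\Lambda_{\gamma_1v}$, and $\mathrm{cov}(\Lambda)=\mathrm{cov}(\Lambda_v)$.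
   Context: For primitive $u\in\mathbb{Z}^d$, $\Lambda_u=u^\perp\cap\mathbb{Z}^d$. $H_v\le\mathrm{SO}_d$ is the stabilizer of $v$; $g_v\in\mathrm{SL}_d(\mathbb{Z})$ is a matrix whose first $d-1$ columns form a positively oriented $\mathbb{Z}$-basis of $\Lambda_v$. $\mathrm{ASL}_{d-1}=\{\begin{pmatrix}g&*\\0&1\end{pmatrix}:g\in\mathrm{SL}_{d-1}\}$; $g_v^{-1}H_vg_v\le\mathrm{ASL}_{d-1}$. The covolume of a rank-$(d-1)$ discrete subgroup with basis matrix $b\in M_{d\times(d-1)}(\mathbb{R})$ is $\sqrt{\det(b^tb)}$. *)

theory Defs
  imports "Jordan_Normal_Form.Determinant" "HOL-Computational_Algebra.Primes"
begin

text \<open>q lies in p^k Z_(p), i.e. the p-adic valuation of q is at least k (q = 0 included).\<close>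
definition in_pZ :: "nat \<Rightarrow> nat \<Rightarrow> rat \<Rightarrow> bool" where
  "in_pZ p k q \<longleftrightarrow> (\<exists>a b::int. b \<noteq> 0 \<and> \<not> int p dvd b \<and> q = of_int (int p ^ k * a) / of_int b)"

definition in_Zinvp :: "nat \<Rightarrow> rat \<Rightarrow> bool" where
  "in_Zinvp p q \<longleftrightarrow> (\<exists>(a::int) (k::nat). q = of_int a / of_nat p ^ k)"

text \<open>A d x d matrix over Q_p is represented by a sequence of rational d x d matrices
  that is entrywise Cauchy for the p-adic absolute value; Q_p is the completion of Q.\<close>
definition padic_mat :: "nat \<Rightarrow> nat \<Rightarrow> (nat \<Rightarrow> rat mat) \<Rightarrow> bool" where
  "padic_mat p d X \<longleftrightarrow> (\<forall>n. X n \<in> carrier_mat d d) \<and>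
     (\<forall>k. \<exists>N. \<forall>m\<ge>N. \<forall>n\<ge>N. \<forall>i<d. \<forall>j<d. in_pZ p k ((X m - X n) $$ (i,j)))"

text \<open>Equality in Q_p: the difference tends to 0 p-adically.\<close>
definition padic_num_eq :: "nat \<Rightarrow> (nat \<Rightarrow> rat) \<Rightarrow> (nat \<Rightarrow> rat) \<Rightarrow> bool" where
  "padic_num_eq p x y \<longleftrightarrow> (\<forall>k. \<exists>N. \<forall>n\<ge>N. in_pZ p k (x n - y n))"

definition padic_mat_eq :: "nat \<Rightarrow> nat \<Rightarrow> (nat \<Rightarrow> rat mat) \<Rightarrow> (nat \<Rightarrow> rat mat) \<Rightarrow> bool" where
  "padic_mat_eq p d X Y \<longleftrightarrow> (\<forall>i<d. \<forall>j<d. padic_num_eq p (\<lambda>n. X n $$ (i,j)) (\<lambda>n. Y n $$ (i,j)))"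

definition padic_vec_eq :: "nat \<Rightarrow> nat \<Rightarrow> (nat \<Rightarrow> rat vec) \<Rightarrow> (nat \<Rightarrow> rat vec) \<Rightarrow> bool" where
  "padic_vec_eq p d x y \<longleftrightarrow> (\<forall>i<d. padic_num_eq p (\<lambda>n. x n $ i) (\<lambda>n. y n $ i))"

text \<open>All entries lie in Z_p (the limit of a Cauchy sequence lies in the closed set Z_p
  iff the sequence eventually lies in Z_(p)).\<close>
definition padic_integral :: "nat \<Rightarrow> nat \<Rightarrow> (nat \<Rightarrow> rat mat) \<Rightarrow> bool" where
  "padic_integral p d X \<longleftrightarrow> (\<exists>N. \<forall>n\<ge>N. \<forall>i<d. \<forall>j<d. in_pZ p 0 (X n $$ (i,j)))"

definition SO_Qp :: "nat \<Rightarrow> nat \<Rightarrow> (nat \<Rightarrow> rat mat) set" where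
  "SO_Qp p d = {X. padic_mat p d X \<and>
      padic_mat_eq p d (\<lambda>n. transpose_mat (X n) * X n) (\<lambda>n. 1\<^sub>m d) \<and>
      padic_num_eq p (\<lambda>n. det (X n)) (\<lambda>n. 1)}"

definition SO_Zp :: "nat \<Rightarrow> nat \<Rightarrow> (nat \<Rightarrow> rat mat) set" where
  "SO_Zp p d = {X. X \<in> SO_Qp p d \<and> padic_integral p d X}"

definition H_Qp :: "nat \<Rightarrow> nat \<Rightarrow> int vec \<Rightarrow> (nat \<Rightarrow> rat mat) set" where
  "H_Qp p d v = {X. X \<in> SO_Qp p d \<and>
      padic_vec_eq p d (\<lambda>n. X n *\<^sub>v map_vec of_int v) (\<lambda>n. map_vec of_int v)}"

text \<open>ASL_{d-1}(Z_p): block matrices (g *; 0 1) with g in SL_{d-1}, entries in Z_p.\<close>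
definition ASL_Zp :: "nat \<Rightarrow> nat \<Rightarrow> (nat \<Rightarrow> rat mat) set" where
  "ASL_Zp p d = {X. padic_mat p d X \<and> padic_integral p d X \<and>
      (\<forall>j<d. padic_num_eq p (\<lambda>n. X n $$ (d-1, j)) (\<lambda>n. if j = d-1 then 1 else 0)) \<and>
      padic_num_eq p (\<lambda>n. det (X n)) (\<lambda>n. 1)}"

definition SO_Zinvp :: "nat \<Rightarrow> nat \<Rightarrow> rat mat set" where
  "SO_Zinvp p d = {M. M \<in> carrier_mat d d \<and> (\<forall>i<d. \<forall>j<d. in_Zinvp p (M $$ (i,j))) \<and>
      transpose_mat M * M = 1\<^sub>m d \<and> det M = 1}"

definition ASL_Zinvp :: "nat \<Rightarrow> nat \<Rightarrow> rat mat set" where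
  "ASL_Zinvp p d = {M. M \<in> carrier_mat d d \<and> (\<forall>i<d. \<forall>j<d. in_Zinvp p (M $$ (i,j))) \<and>
      (\<forall>j<d. M $$ (d-1, j) = (if j = d-1 then 1 else 0)) \<and> det M = 1}"

definition mat_inv :: "nat \<Rightarrow> rat mat \<Rightarrow> rat mat" where
  "mat_inv d A = (SOME B. B \<in> carrier_mat d d \<and> A * B = 1\<^sub>m d \<and> B * A = 1\<^sub>m d)"

definition primitive :: "nat \<Rightarrow> int vec \<Rightarrow> bool" where
  "primitive d v \<longleftrightarrow> v \<in> carrier_vec d \<and> v \<noteq> 0\<^sub>v d \<and>
     (\<forall>k::int. (\<forall>i<d. k dvd v $ i) \<longrightarrow> is_unit k)"

definition Lambda :: "nat \<Rightarrow> int vec \<Rightarrow> rat vec set" where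
  "Lambda d u = {map_vec of_int x | x. x \<in> carrier_vec d \<and> x \<bullet> u = 0}"

definition first_cols :: "'a mat \<Rightarrow> nat \<Rightarrow> 'a mat" where
  "first_cols B k = mat (dim_row B) k (\<lambda>(i,j). B $$ (i,j))"

definition zspan :: "rat mat \<Rightarrow> rat vec set" where
  "zspan B = {B *\<^sub>v map_vec of_int c | c. c \<in> carrier_vec (dim_col B)}"

definition lattice_basis :: "rat mat \<Rightarrow> rat vec set \<Rightarrow> bool" where
  "lattice_basis B L \<longleftrightarrow> zspan B = L \<and>
     (\<forall>c \<in> carrier_vec (dim_col B). B *\<^sub>v map_vec of_int c = 0\<^sub>v (dim_row B) \<longrightarrow> c = 0\<^sub>v (dim_col B))"

definition covol :: "nat \<Rightarrow> rat vec set \<Rightarrow> real" where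
  "covol d L = (SOME c. \<exists>B \<in> carrier_mat d (d-1). lattice_basis B L \<and>
       c = sqrt (real_of_rat (det (transpose_mat B * B))))"

text \<open>g is a valid choice of g_v: g in SL_d(Z), its first d-1 columns form a Z-basis of
  Lambda_v, positively oriented (det(b_1,...,b_{d-1},v) > 0).\<close>
definition is_gv :: "nat \<Rightarrow> int vec \<Rightarrow> int mat \<Rightarrow> bool" where
  "is_gv d v g \<longleftrightarrow> g \<in> carrier_mat d d \<and> det g = 1 \<and>
     lattice_basis (first_cols (map_mat of_int g) (d-1)) (Lambda d v) \<and>
     det (mat d d (\<lambda>(i,j). if j < d-1 then g $$ (i,j) else v $ i)) > 0"

end

theory Submission
  imports Defs
begin

text \<open>
  Put \<open>w = \<gamma>\<^sub>1 v\<close>. At a prime \<open>q \<noteq> p\<close> both \<open>\<gamma>\<^sub>1\<close> and \<open>\<gamma>\<^sub>1\<^sup>T = \<gamma>\<^sub>1\<^sup>-\<^sup>1\<close> are \<open>q\<close>-integral.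
  At \<open>p\<close>, since \<open>h\<close> fixes \<open>v\<close> and \<open>h = c\<^sub>1 \<gamma>\<^sub>1\<close>, the vector \<open>c\<^sub>1 w\<close> equals \<open>v\<close> with \<open>c\<^sub>1\<close> and
  \<open>c\<^sub>1\<^sup>-\<^sup>1 = c\<^sub>1\<^sup>T\<close> both \<open>p\<close>-integral. Hence \<open>v\<close> and \<open>w\<close> have the same \<open>q\<close>-adic valuation for every
  prime \<open>q\<close>, so \<open>w\<close> is a primitive integer vector. In the same way \<open>c\<^sub>1 (\<gamma>\<^sub>1 g \<gamma>\<^sub>2) = g c\<^sub>2\<close>
  shows that \<open>M = \<gamma>\<^sub>1 g \<gamma>\<^sub>2\<close> lies in \<open>SL\<^sub>d(\<int>)\<close>. As \<open>\<gamma>\<^sub>2\<close> is affine, the first \<open>d - 1\<close> columns of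
  \<open>M\<close> are \<open>\<gamma>\<^sub>1 b A\<close>, where \<open>b\<close> consists of the first \<open>d - 1\<close> columns of \<open>g\<close> and \<open>A \<in> SL\<^sub>d\<^sub>-\<^sub>1\<close> is the
  upper left block of \<open>\<gamma>\<^sub>2\<close>. These columns are orthogonal to \<open>w\<close>, so, being columns of a
  unimodular matrix, they form a basis of \<open>\<Lambda>\<^sub>w\<close>; and their Gram matrix \<open>A\<^sup>T b\<^sup>T b A\<close> has the
  same determinant as \<open>b\<^sup>T b\<close>.
\<close>

lemma not_dvd_one_if_prime:
  "prime p \<Longrightarrow> \<not> int p dvd 1"
  using prime_gt_1_nat by fastforce

lemma in_pZ_add:
  assumes p: "prime p" and x: "in_pZ p k x" and y: "in_pZ p k y"
  shows "in_pZ p k (x + y)"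
proof -
  obtain a b where ab: "b \<noteq> 0" "\<not> int p dvd b" "x = of_int (int p ^ k * a) / of_int b"
    using x unfolding in_pZ_def by blast
  obtain a' b' where ab': "b' \<noteq> 0" "\<not> int p dvd b'" "y = of_int (int p ^ k * a') / of_int b'"
    using y unfolding in_pZ_def by blast
  have "\<not> int p dvd b * b'"
    using ab ab' p by (simp add: prime_dvd_mult_iff)
  moreover have "x + y = of_int (int p ^ k * (a * b' + a' * b)) / of_int (b * b')"
    using ab ab' by (simp add: field_simps)
  ultimately show ?thesis
    unfolding in_pZ_def using ab ab' by (metis mult_eq_0_iff)
qed

lemma in_pZ_uminus:
  assumes "in_pZ p k x"
  shows "in_pZ p k (- x)"
proof -
  obtain a b where ab: "b \<noteq> 0" "\<not> int p dvd b" "x = of_int (int p ^ k * a) / of_int b"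
    using assms unfolding in_pZ_def by blast
  then have "- x = of_int (int p ^ k * - a) / of_int b" by simp
  then show ?thesis unfolding in_pZ_def using ab by blast
qed

lemma in_pZ_mult:
  assumes p: "prime p" and x: "in_pZ p k x" and y: "in_pZ p l y"
  shows "in_pZ p (k + l) (x * y)"
proof -
  obtain a b where ab: "b \<noteq> 0" "\<not> int p dvd b" "x = of_int (int p ^ k * a) / of_int b"
    using x unfolding in_pZ_def by blast
  obtain a' b' where ab': "b' \<noteq> 0" "\<not> int p dvd b'" "y = of_int (int p ^ l * a') / of_int b'"
    using y unfolding in_pZ_def by blast
  have "\<not> int p dvd b * b'"
    using ab ab' p by (simp add: prime_dvd_mult_iff)
  moreover have "x * y = of_int (int p ^ (k + l) * (a * a')) / of_int (b * b')"
    unfolding ab(3) ab'(3) by (simp add: power_add)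
  ultimately show ?thesis
    unfolding in_pZ_def using ab ab' by (metis mult_eq_0_iff)
qed

lemma in_pZ_0 [simp]: "prime p \<Longrightarrow> in_pZ p k 0"
  unfolding in_pZ_def using not_dvd_one_if_prime
  by (intro exI[of _ 0] exI[of _ 1]) auto

lemma in_pZ_of_int: "prime p \<Longrightarrow> in_pZ p 0 (of_int n)"
  unfolding in_pZ_def using not_dvd_one_if_prime
  by (intro exI[of _ n] exI[of _ 1]) auto

lemma in_pZ_sum:
  assumes "prime p" and "finite A" and "\<And>i. i \<in> A \<Longrightarrow> in_pZ p k (f i)"
  shows "in_pZ p k (sum f A)"
  using assms(2,3) by (induction A rule: finite_induct) (auto intro: in_pZ_add[OF \<open>prime p\<close>] simp: \<open>prime p\<close>)

lemma in_pZ_of_int_iff_dvd: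
  assumes p: "prime p"
  shows "in_pZ p 1 (of_int n) \<longleftrightarrow> int p dvd n"
proof
  assume "in_pZ p 1 (of_int n)"
  then obtain a b where ab: "b \<noteq> 0" "\<not> int p dvd b" "(of_int n :: rat) = of_int (int p * a) / of_int b"
    unfolding in_pZ_def by auto
  then have "(of_int (n * b) :: rat) = of_int (int p * a)"
    by (simp add: eq_divide_eq)
  then have "int p dvd n * b"
    by (metis dvd_triv_left of_int_eq_iff)
  then show "int p dvd n"
    using ab p by (simp add: prime_dvd_mult_iff)
next
  assume "int p dvd n"
  then obtain t where "n = int p * t" by blast
  then show "in_pZ p 1 (of_int n)"
    unfolding in_pZ_def using not_dvd_one_if_prime[OF p]
    by (intro exI[of _ t] exI[of _ 1]) auto
qed

lemma in_pZ_mult_bounded: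
  assumes p: "prime p" and a: "in_pZ p 0 (of_nat p ^ m * a)" and x: "in_pZ p (k + m) x"
  shows "in_pZ p k (a * x)"
proof -
  obtain a' b where ab: "b \<noteq> 0" "\<not> int p dvd b" "of_nat p ^ m * a * x = of_int (int p ^ (k + m) * a') / of_int b"
    using in_pZ_mult[OF p a x] unfolding in_pZ_def by auto
  have "(of_nat p ^ m :: rat) * (a * x) = of_nat p ^ m * (of_int (int p ^ k * a') / of_int b)"
    using ab(3) by (simp add: power_add field_simps)
  moreover have "(of_nat p ^ m :: rat) \<noteq> 0" using p by auto
  ultimately have "a * x = of_int (int p ^ k * a') / of_int b"
    using mult_left_cancel by blast
  then show ?thesis unfolding in_pZ_def using ab(1,2) by blast
qed

lemma in_pZ_exists_power_mult:
  assumes p: "prime p"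
  shows "\<exists>m. in_pZ p 0 (of_nat p ^ m * a)"
proof -
  obtain n e where ne: "quotient_of a = (n, e)" by (cases "quotient_of a")
  have e: "e > 0" and a: "a = of_int n / of_int e"
    using ne quotient_of_denom_pos quotient_of_div by blast+
  have pr: "prime (int p)" using p by simp
  obtain e' where e': "e = int p ^ multiplicity (int p) e * e'" "\<not> int p dvd e'"
    using multiplicity_decompose'[of e "int p"] pr e by (metis less_irrefl not_prime_unit)
  let ?m = "multiplicity (int p) e"
  have "e' \<noteq> 0" using e' e by auto
  have "(of_nat p ^ ?m :: rat) \<noteq> 0" using pr by auto
  moreover have "a = of_int n / (of_nat p ^ ?m * of_int e')"
    using a e'(1) by (metis of_int_mult of_int_of_nat_eq of_int_power)
  ultimately have "of_nat p ^ ?m * a = of_int (int p ^ 0 * n) / of_int e'"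
    by (metis mult_1 nonzero_mult_divide_mult_cancel_left power_0 times_divide_eq_right of_int_1)
  then show ?thesis unfolding in_pZ_def using e'(2) \<open>e' \<noteq> 0\<close> by blast
qed

lemma in_pZ_if_in_Zinvp:
  assumes p: "prime p" and q: "prime q" and "q \<noteq> p" and x: "in_Zinvp p x"
  shows "in_pZ q 0 x"
proof -
  obtain a k where x: "x = of_int a / of_nat p ^ k" using x unfolding in_Zinvp_def by blast
  have "\<not> q dvd p ^ k"
    using p q \<open>q \<noteq> p\<close> prime_dvd_power primes_dvd_imp_eq by blast
  then have "\<not> int q dvd int p ^ k"
    by (metis of_nat_dvd_iff of_nat_power)
  moreover have "int p ^ k \<noteq> 0" using p by auto
  moreover have "x = of_int (int q ^ 0 * a) / of_int (int p ^ k)" using x by simp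
  ultimately show ?thesis unfolding in_pZ_def by blast
qed

lemma Ints_if_in_pZ_all_primes:
  assumes "\<And>q. prime q \<Longrightarrow> in_pZ q 0 x"
  shows "x \<in> \<int>"
proof (rule ccontr)
  assume "x \<notin> \<int>"
  obtain n e where ne: "quotient_of x = (n, e)" by (cases "quotient_of x")
  have e: "e > 0" and x: "x = of_int n / of_int e" and "coprime n e"
    using ne quotient_of_denom_pos quotient_of_div quotient_of_coprime by blast+
  have "\<not> is_unit e" using e x \<open>x \<notin> \<int>\<close> by auto
  then obtain q where q: "prime q" "q dvd e" using e prime_divisorE[of e] by auto
  have "q > 0" using q prime_gt_0_int by blast
  define q' where "q' = nat q"
  have q': "prime q'" "q = int q'" using q \<open>q > 0\<close> unfolding q'_def by auto
  obtain a b where ab: "b \<noteq> 0" "\<not> q dvd b" "x = of_int a / of_int b"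
    using assms[OF q'(1)] unfolding in_pZ_def q'(2) by auto
  have "(of_int (n * b) :: rat) = of_int (a * e)"
    using x ab e by (simp add: field_simps)
  then have "n * b = a * e" by (rule of_int_eq_iff[THEN iffD1])
  then have "q dvd n * b" using q(2) by simp
  then have "q dvd n" using q ab(2) by (simp add: prime_dvd_mult_iff)
  then have "is_unit q" using coprime_common_divisor[OF \<open>coprime n e\<close> _ q(2)] by blast
  then show False using q(1) not_prime_unit by blast
qed

definition pZ_vec :: "nat \<Rightarrow> nat \<Rightarrow> rat vec \<Rightarrow> bool" where
  "pZ_vec p k x \<longleftrightarrow> (\<forall>i<dim_vec x. in_pZ p k (x $ i))"

definition pZ_mat :: "nat \<Rightarrow> nat \<Rightarrow> rat mat \<Rightarrow> bool" where
  "pZ_mat p k A \<longleftrightarrow> (\<forall>i<dim_row A. \<forall>j<dim_col A. in_pZ p k (A $$ (i,j)))"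

lemma pZ_vec_mult_mat_vec:
  assumes p: "prime p" and A: "pZ_mat p k A" and x: "pZ_vec p l x" and dim: "dim_col A = dim_vec x"
  shows "pZ_vec p (k + l) (A *\<^sub>v x)"
  unfolding pZ_vec_def
proof (intro allI impI)
  fix i assume "i < dim_vec (A *\<^sub>v x)"
  then have i: "i < dim_row A" by simp
  have "in_pZ p (k + l) (\<Sum>j<dim_vec x. A $$ (i,j) * x $ j)"
    using A x i dim by (intro in_pZ_sum[OF p] in_pZ_mult[OF p]) (auto simp: pZ_mat_def pZ_vec_def)
  moreover have "(A *\<^sub>v x) $ i = (\<Sum>j<dim_vec x. A $$ (i,j) * x $ j)"
    using i dim by (auto simp: scalar_prod_def atLeast0LessThan intro: sum.cong)
  ultimately show "in_pZ p (k + l) ((A *\<^sub>v x) $ i)" by simp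
qed

lemma pZ_mat_mult:
  assumes p: "prime p" and A: "pZ_mat p k A" and B: "pZ_mat p l B" and dim: "dim_col A = dim_row B"
  shows "pZ_mat p (k + l) (A * B)"
  unfolding pZ_mat_def
proof (intro allI impI)
  fix i j assume "i < dim_row (A * B)" "j < dim_col (A * B)"
  then have ij: "i < dim_row A" "j < dim_col B" by auto
  have "in_pZ p (k + l) (\<Sum>m<dim_row B. A $$ (i,m) * B $$ (m,j))"
    using A B ij dim by (intro in_pZ_sum[OF p] in_pZ_mult[OF p]) (auto simp: pZ_mat_def)
  then show "in_pZ p (k + l) ((A * B) $$ (i,j))"
    using ij dim by (simp add: scalar_prod_def atLeast0LessThan)
qed

lemma pZ_mat_transpose_iff [simp]: "pZ_mat p k (transpose_mat A) \<longleftrightarrow> pZ_mat p k A"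
  unfolding pZ_mat_def by auto

lemma pZ_mat_iff_cols: "pZ_mat p k A \<longleftrightarrow> (\<forall>j<dim_col A. pZ_vec p k (col A j))"
  unfolding pZ_mat_def pZ_vec_def by auto

lemma pZ_vec_of_int: "prime p \<Longrightarrow> pZ_vec p 0 (map_vec of_int x)"
  unfolding pZ_vec_def by (simp add: in_pZ_of_int)

lemma pZ_mat_of_int: "prime p \<Longrightarrow> pZ_mat p 0 (map_mat of_int A)"
  unfolding pZ_mat_def by (simp add: in_pZ_of_int)

lemma pZ_mat_if_in_Zinvp:
  assumes "prime p" "prime q" "q \<noteq> p"
    and "\<forall>i<dim_row A. \<forall>j<dim_col A. in_Zinvp p (A $$ (i,j))"
  shows "pZ_mat q 0 A"
  using assms(4) in_pZ_if_in_Zinvp[OF assms(1-3)] unfolding pZ_mat_def by blast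

lemma vec_of_int_if_pZ_all_primes:
  assumes "\<And>q. prime q \<Longrightarrow> pZ_vec q 0 x"
  shows "\<exists>z. x = map_vec of_int z"
proof -
  have "x $ i \<in> \<int>" if "i < dim_vec x" for i
    using assms that by (intro Ints_if_in_pZ_all_primes) (auto simp: pZ_vec_def)
  then have "x = map_vec of_int (vec (dim_vec x) (\<lambda>i. \<lfloor>x $ i\<rfloor>))"
    by (intro eq_vecI) auto
  then show ?thesis ..
qed

lemma mat_of_int_if_pZ_all_primes:
  assumes "\<And>q. prime q \<Longrightarrow> pZ_mat q 0 A"
  shows "\<exists>Z. A = map_mat of_int Z"
proof -
  have "A $$ (i,j) \<in> \<int>" if "i < dim_row A" "j < dim_col A" for i j
    using assms that by (intro Ints_if_in_pZ_all_primes) (auto simp: pZ_mat_def)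
  then have "A = map_mat of_int (mat (dim_row A) (dim_col A) (\<lambda>ij. \<lfloor>A $$ ij\<rfloor>))"
    by (intro eq_matI) auto
  then show ?thesis ..
qed

definition padic_bounded :: "nat \<Rightarrow> (nat \<Rightarrow> rat) \<Rightarrow> bool" where
  "padic_bounded p x \<longleftrightarrow> (\<exists>m. eventually (\<lambda>n. in_pZ p 0 (of_nat p ^ m * x n)) sequentially)"

definition padic_bounded_mat :: "nat \<Rightarrow> nat \<Rightarrow> (nat \<Rightarrow> rat mat) \<Rightarrow> bool" where
  "padic_bounded_mat p d A \<longleftrightarrow> (\<forall>i<d. \<forall>j<d. padic_bounded p (\<lambda>n. A n $$ (i,j)))"

lemma padic_num_eq_iff_eventually:
  "padic_num_eq p x y \<longleftrightarrow> (\<forall>k. eventually (\<lambda>n. in_pZ p k (x n - y n)) sequentially)"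
  unfolding padic_num_eq_def eventually_sequentially ..

lemma padic_num_eq_sym: "padic_num_eq p x y \<Longrightarrow> padic_num_eq p y x"
  unfolding padic_num_eq_iff_eventually
proof (intro allI)
  fix k
  assume "\<forall>k. eventually (\<lambda>n. in_pZ p k (x n - y n)) sequentially"
  then have "eventually (\<lambda>n. in_pZ p k (x n - y n)) sequentially" ..
  then show "eventually (\<lambda>n. in_pZ p k (y n - x n)) sequentially"
    by eventually_elim (use in_pZ_uminus in fastforce)
qed

lemma padic_num_eq_trans:
  assumes p: "prime p" and "padic_num_eq p x y" "padic_num_eq p y z"
  shows "padic_num_eq p x z"
  unfolding padic_num_eq_iff_eventually
proof
  fix k
  have "eventually (\<lambda>n. in_pZ p k (x n - y n)) sequentially"
       "eventually (\<lambda>n. in_pZ p k (y n - z n)) sequentially"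
    using assms(2,3) unfolding padic_num_eq_iff_eventually by auto
  then show "eventually (\<lambda>n. in_pZ p k (x n - z n)) sequentially"
    by eventually_elim (use in_pZ_add[OF p] in fastforce)
qed

lemma padic_bounded_const: "prime p \<Longrightarrow> padic_bounded p (\<lambda>n. c)"
  unfolding padic_bounded_def using in_pZ_exists_power_mult by auto

lemma padic_bounded_if_eventually_in_pZ:
  "eventually (\<lambda>n. in_pZ p 0 (x n)) sequentially \<Longrightarrow> padic_bounded p x"
  unfolding padic_bounded_def by (intro exI[of _ 0]) simp

lemma padic_num_eq_sum_mult:
  assumes p: "prime p" and L: "finite L" and a: "\<And>l. l \<in> L \<Longrightarrow> padic_bounded p (a l)"
    and xy: "\<And>l. l \<in> L \<Longrightarrow> padic_num_eq p (x l) (y l)"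
  shows "padic_num_eq p (\<lambda>n. \<Sum>l\<in>L. a l n * x l n) (\<lambda>n. \<Sum>l\<in>L. a l n * y l n)"
  unfolding padic_num_eq_iff_eventually
proof
  fix k
  have "eventually (\<lambda>n. in_pZ p k (a l n * (x l n - y l n))) sequentially" if l: "l \<in> L" for l
  proof -
    obtain m where m: "eventually (\<lambda>n. in_pZ p 0 (of_nat p ^ m * a l n)) sequentially"
      using a[OF l] unfolding padic_bounded_def by blast
    moreover have "eventually (\<lambda>n. in_pZ p (k + m) (x l n - y l n)) sequentially"
      using xy[OF l] unfolding padic_num_eq_iff_eventually by blast
    ultimately show ?thesis
      by eventually_elim (rule in_pZ_mult_bounded[OF p])
  qed
  then have "eventually (\<lambda>n. \<forall>l\<in>L. in_pZ p k (a l n * (x l n - y l n))) sequentially"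
    by (intro eventually_ball_finite[OF L]) blast
  then show "eventually (\<lambda>n. in_pZ p k ((\<Sum>l\<in>L. a l n * x l n) - (\<Sum>l\<in>L. a l n * y l n))) sequentially"
  proof eventually_elim
    case (elim n)
    have "(\<Sum>l\<in>L. a l n * x l n) - (\<Sum>l\<in>L. a l n * y l n) = (\<Sum>l\<in>L. a l n * (x l n - y l n))"
      by (simp add: sum_subtractf right_diff_distrib)
    then show ?case using in_pZ_sum[OF p L] elim by simp
  qed
qed

lemma in_pZ_padic_limit:
  assumes p: "prime p" and eq: "padic_num_eq p (\<lambda>n. c) y"
    and y: "eventually (\<lambda>n. in_pZ p k (y n)) sequentially"
  shows "in_pZ p k c"
proof -
  have "eventually (\<lambda>n. in_pZ p k (c - y n)) sequentially"
    using eq unfolding padic_num_eq_iff_eventually by blast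
  with y have "eventually (\<lambda>n. in_pZ p k c) sequentially"
    by eventually_elim (use in_pZ_add[OF p] in fastforce)
  then show ?thesis by simp
qed

lemma mult_mat_vec_eq_sum:
  assumes "A \<in> carrier_mat nr d" "v \<in> carrier_vec d" "i < nr"
  shows "(A *\<^sub>v v) $ i = (\<Sum>l<d. A $$ (i,l) * v $ l)"
  using assms by (simp add: scalar_prod_def atLeast0LessThan)

lemma padic_vec_eq_sym: "padic_vec_eq p d x y \<Longrightarrow> padic_vec_eq p d y x"
  unfolding padic_vec_eq_def using padic_num_eq_sym by blast

lemma padic_vec_eq_trans:
  "prime p \<Longrightarrow> padic_vec_eq p d x y \<Longrightarrow> padic_vec_eq p d y z \<Longrightarrow> padic_vec_eq p d x z"
  unfolding padic_vec_eq_def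
  by (intro allI impI, rule padic_num_eq_trans[of p _ "\<lambda>n. y n $ _"]) auto

lemma padic_bounded_mat_const: "prime p \<Longrightarrow> padic_bounded_mat p d (\<lambda>n. A)"
  unfolding padic_bounded_mat_def using padic_bounded_const by auto

lemma padic_bounded_mat_if_eventually_pZ_mat:
  assumes "eventually (\<lambda>n. pZ_mat p 0 (A n)) sequentially" and "\<And>n. A n \<in> carrier_mat d d"
  shows "padic_bounded_mat p d A"
  unfolding padic_bounded_mat_def
proof (intro allI impI padic_bounded_if_eventually_in_pZ)
  fix i j assume "i < d" "j < d"
  with assms(1) show "eventually (\<lambda>n. in_pZ p 0 (A n $$ (i, j))) sequentially"
    by (auto elim!: eventually_mono simp: pZ_mat_def assms(2)[THEN carrier_matD(1)] assms(2)[THEN carrier_matD(2)])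
qed

lemma padic_vec_eq_mult_mat_vec:
  assumes p: "prime p" and A: "\<And>n. A n \<in> carrier_mat d d" and b: "padic_bounded_mat p d A"
    and x: "\<And>n. x n \<in> carrier_vec d" and y: "\<And>n. y n \<in> carrier_vec d" and e: "padic_vec_eq p d x y"
  shows "padic_vec_eq p d (\<lambda>n. A n *\<^sub>v x n) (\<lambda>n. A n *\<^sub>v y n)"
  unfolding padic_vec_eq_def
proof (intro allI impI)
  fix i assume i: "i < d"
  have "padic_num_eq p (\<lambda>n. \<Sum>l<d. A n $$ (i,l) * x n $ l) (\<lambda>n. \<Sum>l<d. A n $$ (i,l) * y n $ l)"
    using b e i by (intro padic_num_eq_sum_mult[OF p]) (auto simp: padic_bounded_mat_def padic_vec_eq_def)
  then show "padic_num_eq p (\<lambda>n. (A n *\<^sub>v x n) $ i) (\<lambda>n. (A n *\<^sub>v y n) $ i)"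
    using mult_mat_vec_eq_sum[OF A x i] mult_mat_vec_eq_sum[OF A y i] by simp
qed

lemma padic_vec_eq_mat_eq_mult_vec:
  assumes p: "prime p" and X: "\<And>n. X n \<in> carrier_mat d d" and Y: "\<And>n. Y n \<in> carrier_mat d d"
    and u: "u \<in> carrier_vec d" and e: "padic_mat_eq p d X Y"
  shows "padic_vec_eq p d (\<lambda>n. X n *\<^sub>v u) (\<lambda>n. Y n *\<^sub>v u)"
  unfolding padic_vec_eq_def
proof (intro allI impI)
  fix i assume i: "i < d"
  have "padic_num_eq p (\<lambda>n. \<Sum>l<d. u $ l * X n $$ (i,l)) (\<lambda>n. \<Sum>l<d. u $ l * Y n $$ (i,l))"
    using e i padic_bounded_const[OF p]
    by (intro padic_num_eq_sum_mult[OF p]) (auto simp: padic_mat_eq_def)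
  then show "padic_num_eq p (\<lambda>n. (X n *\<^sub>v u) $ i) (\<lambda>n. (Y n *\<^sub>v u) $ i)"
    using mult_mat_vec_eq_sum[OF X u i] mult_mat_vec_eq_sum[OF Y u i] by (simp add: mult.commute)
qed

lemma pZ_vec_padic_limit:
  assumes p: "prime p" and x: "x \<in> carrier_vec d" and y: "\<And>n. y n \<in> carrier_vec d"
    and eq: "padic_vec_eq p d (\<lambda>n. x) y" and ev: "eventually (\<lambda>n. pZ_vec p k (y n)) sequentially"
  shows "pZ_vec p k x"
  unfolding pZ_vec_def
proof (intro allI impI)
  fix i assume "i < dim_vec x"
  then have i: "i < d" using x by simp
  show "in_pZ p k (x $ i)"
  proof (rule in_pZ_padic_limit[OF p])
    show "padic_num_eq p (\<lambda>n. x $ i) (\<lambda>n. y n $ i)" using eq i unfolding padic_vec_eq_def by blast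
    show "eventually (\<lambda>n. in_pZ p k (y n $ i)) sequentially"
      using ev by eventually_elim (use y[THEN carrier_vecD] i in \<open>auto simp: pZ_vec_def\<close>)
  qed
qed

lemma eventually_pZ_mat_if_padic_integral:
  assumes "padic_integral p d X" and "\<And>n. X n \<in> carrier_mat d d"
  shows "eventually (\<lambda>n. pZ_mat p 0 (X n)) sequentially"
proof -
  obtain N where "\<forall>n\<ge>N. \<forall>i<d. \<forall>j<d. in_pZ p 0 (X n $$ (i,j))"
    using assms(1) unfolding padic_integral_def by blast
  then show ?thesis
    unfolding eventually_sequentially pZ_mat_def using assms(2) by (metis carrier_matD)
qed

lemma SO_ZpD:
  assumes "c \<in> SO_Zp p d"
  shows "c n \<in> carrier_mat d d"
    and "padic_mat_eq p d (\<lambda>n. transpose_mat (c n) * c n) (\<lambda>n. 1\<^sub>m d)"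
    and "eventually (\<lambda>n. pZ_mat p 0 (c n)) sequentially"
proof -
  show cc: "c n \<in> carrier_mat d d" for n
    using assms unfolding SO_Zp_def SO_Qp_def padic_mat_def by blast
  show "padic_mat_eq p d (\<lambda>n. transpose_mat (c n) * c n) (\<lambda>n. 1\<^sub>m d)"
    using assms unfolding SO_Zp_def SO_Qp_def by blast
  show "eventually (\<lambda>n. pZ_mat p 0 (c n)) sequentially"
    using assms cc unfolding SO_Zp_def by (intro eventually_pZ_mat_if_padic_integral) auto
qed

lemma pZ_vec_if_integral_mult_vec_eq:
  assumes p: "prime p" and c: "eventually (\<lambda>n. pZ_mat p 0 (c n)) sequentially"
    and cc: "\<And>n. c n \<in> carrier_mat d d" and x: "x \<in> carrier_vec d" and y: "y \<in> carrier_vec d"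
    and eq: "padic_vec_eq p d (\<lambda>n. c n *\<^sub>v x) (\<lambda>n. y)" and xk: "pZ_vec p k x"
  shows "pZ_vec p k y"
proof (rule pZ_vec_padic_limit[OF p y _ padic_vec_eq_sym[OF eq]])
  show "c n *\<^sub>v x \<in> carrier_vec d" for n by (rule mult_mat_vec_carrier[OF cc x])
  show "eventually (\<lambda>n. pZ_vec p k (c n *\<^sub>v x)) sequentially"
    using c by eventually_elim (use pZ_vec_mult_mat_vec[OF p _ xk] cc x in fastforce)
qed

text \<open>Since \<open>c\<^sup>T c\<close> tends to \<open>1\<close> and \<open>c\<^sup>T\<close> is integral, \<open>x\<close> is the limit of the \<open>c\<^sup>T y\<close>.\<close>

lemma pZ_vec_if_SO_Zp_mult_vec_eq:
  assumes p: "prime p" and c: "c \<in> SO_Zp p d" and x: "x \<in> carrier_vec d"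
    and y: "\<And>n. y n \<in> carrier_vec d" and eq: "padic_vec_eq p d (\<lambda>n. c n *\<^sub>v x) y"
    and yk: "eventually (\<lambda>n. pZ_vec p k (y n)) sequentially"
  shows "pZ_vec p k x"
proof -
  note cc = SO_ZpD(1)[OF c]
  have cT: "transpose_mat (c n) \<in> carrier_mat d d" for n using cc by simp
  have cT_int: "eventually (\<lambda>n. pZ_mat p 0 (transpose_mat (c n))) sequentially"
    using SO_ZpD(3)[OF c] by simp
  have cTy: "padic_vec_eq p d (\<lambda>n. transpose_mat (c n) *\<^sub>v (c n *\<^sub>v x)) (\<lambda>n. transpose_mat (c n) *\<^sub>v y n)"
    by (rule padic_vec_eq_mult_mat_vec[OF p cT padic_bounded_mat_if_eventually_pZ_mat[OF cT_int cT]
          mult_mat_vec_carrier[OF cc x] y eq])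
  have "padic_vec_eq p d (\<lambda>n. (transpose_mat (c n) * c n) *\<^sub>v x) (\<lambda>n. 1\<^sub>m d *\<^sub>v x)"
    by (rule padic_vec_eq_mat_eq_mult_vec[OF p mult_carrier_mat[OF cT cc] one_carrier_mat x SO_ZpD(2)[OF c]])
  then have cTcx: "padic_vec_eq p d (\<lambda>n. transpose_mat (c n) *\<^sub>v (c n *\<^sub>v x)) (\<lambda>n. x)"
    by (simp add: assoc_mult_mat_vec[OF cT cc x] one_mult_mat_vec[OF x])
  have "padic_vec_eq p d (\<lambda>n. x) (\<lambda>n. transpose_mat (c n) *\<^sub>v y n)"
    by (rule padic_vec_eq_trans[OF p padic_vec_eq_sym[OF cTcx] cTy])
  moreover have "eventually (\<lambda>n. pZ_vec p k (transpose_mat (c n) *\<^sub>v y n)) sequentially"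
    using cT_int yk
  proof eventually_elim
    case (elim n)
    then show ?case using pZ_vec_mult_mat_vec[OF p elim] cT[of n] y[of n] by simp
  qed
  ultimately show ?thesis
    by (rule pZ_vec_padic_limit[OF p x mult_mat_vec_carrier[OF cT y]])
qed

lemma pZ_vec_SO_Zinvp_mult_iff:
  assumes p: "prime p" and q: "prime q" and c: "c \<in> SO_Zp p d" and \<gamma>: "\<gamma> \<in> SO_Zinvp p d"
    and x: "x \<in> carrier_vec d" and fixed: "padic_vec_eq p d (\<lambda>n. c n *\<^sub>v (\<gamma> *\<^sub>v x)) (\<lambda>n. x)"
  shows "pZ_vec q k (\<gamma> *\<^sub>v x) \<longleftrightarrow> pZ_vec q k x"
proof -
  have \<gamma>c: "\<gamma> \<in> carrier_mat d d" and orth: "transpose_mat \<gamma> * \<gamma> = 1\<^sub>m d"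
    and \<gamma>Z: "\<forall>i<d. \<forall>j<d. in_Zinvp p (\<gamma> $$ (i,j))"
    using \<gamma> unfolding SO_Zinvp_def by auto
  have \<gamma>x: "\<gamma> *\<^sub>v x \<in> carrier_vec d" using \<gamma>c x by simp
  show ?thesis
  proof (cases "q = p")
    case True
    show ?thesis
      using pZ_vec_if_SO_Zp_mult_vec_eq[OF p c \<gamma>x _ fixed]
        pZ_vec_if_integral_mult_vec_eq[OF p SO_ZpD(3)[OF c] SO_ZpD(1)[OF c] \<gamma>x x fixed]
      unfolding True using x by auto
  next
    case False
    have \<gamma>_int: "pZ_mat q 0 \<gamma>" using pZ_mat_if_in_Zinvp[OF p q False] \<gamma>Z \<gamma>c by simp
    have "x = transpose_mat \<gamma> *\<^sub>v (\<gamma> *\<^sub>v x)"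
      using \<gamma>c x by (simp add: assoc_mult_mat_vec[symmetric] orth)
    moreover have "pZ_vec q (0 + k) (transpose_mat \<gamma> *\<^sub>v (\<gamma> *\<^sub>v x))" if "pZ_vec q k (\<gamma> *\<^sub>v x)"
      using pZ_vec_mult_mat_vec[OF q pZ_mat_transpose_iff[THEN iffD2, OF \<gamma>_int] that] \<gamma>c by simp
    moreover have "pZ_vec q (0 + k) (\<gamma> *\<^sub>v x)" if "pZ_vec q k x"
      using pZ_vec_mult_mat_vec[OF q \<gamma>_int that] \<gamma>c x by simp
    ultimately show ?thesis by auto
  qed
qed

lemma padic_mat_eq_sym: "padic_mat_eq p d X Y \<Longrightarrow> padic_mat_eq p d Y X"
  unfolding padic_mat_eq_def using padic_num_eq_sym by blast

lemma mat_inv_if_det_nonzero: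
  assumes A: "A \<in> carrier_mat d d" and "det A \<noteq> 0"
  shows "mat_inv d A \<in> carrier_mat d d" "A * mat_inv d A = 1\<^sub>m d" "mat_inv d A * A = 1\<^sub>m d"
proof -
  have "\<exists>B. B \<in> carrier_mat d d \<and> A * B = 1\<^sub>m d \<and> B * A = 1\<^sub>m d"
    using det_non_zero_imp_unit[OF assms, of undefined] unfolding Units_def ring_mat_def by auto
  from someI_ex[OF this]
  show "mat_inv d A \<in> carrier_mat d d" "A * mat_inv d A = 1\<^sub>m d" "mat_inv d A * A = 1\<^sub>m d"
    unfolding mat_inv_def by auto
qed

lemma pZ_vec_of_int_1_iff_dvd:
  assumes "prime q" and "w \<in> carrier_vec d"
  shows "pZ_vec q 1 (map_vec of_int w) \<longleftrightarrow> (\<forall>i<d. int q dvd w $ i)"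
  using assms in_pZ_of_int_iff_dvd by (auto simp: pZ_vec_def)

lemma primitive_iff_no_prime_divisor:
  "primitive d w \<longleftrightarrow> w \<in> carrier_vec d \<and> w \<noteq> 0\<^sub>v d \<and> (\<forall>q. prime q \<longrightarrow> \<not> (\<forall>i<d. int q dvd w $ i))"
proof (cases "w \<in> carrier_vec d \<and> w \<noteq> 0\<^sub>v d")
  case True
  then have w: "w \<in> carrier_vec d" "w \<noteq> 0\<^sub>v d" by auto
  have "(\<forall>k::int. (\<forall>i<d. k dvd w $ i) \<longrightarrow> is_unit k) \<longleftrightarrow> (\<forall>q. prime q \<longrightarrow> \<not> (\<forall>i<d. int q dvd w $ i))"
  proof
    assume units: "\<forall>k::int. (\<forall>i<d. k dvd w $ i) \<longrightarrow> is_unit k"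
    show "\<forall>q. prime q \<longrightarrow> \<not> (\<forall>i<d. int q dvd w $ i)"
    proof (intro allI impI notI)
      fix q :: nat assume "prime q" "\<forall>i<d. int q dvd w $ i"
      then have "is_unit (int q)" using units by blast
      then show False using \<open>prime q\<close> by simp
    qed
  next
    assume no_prime: "\<forall>q. prime q \<longrightarrow> \<not> (\<forall>i<d. int q dvd w $ i)"
    show "\<forall>k::int. (\<forall>i<d. k dvd w $ i) \<longrightarrow> is_unit k"
    proof (intro allI impI; rule ccontr)
      fix k :: int assume k: "\<forall>i<d. k dvd w $ i" and "\<not> is_unit k"
      moreover have "k \<noteq> 0"
      proof
        assume "k = 0"
        then have "w = 0\<^sub>v d" using k w(1) by (intro eq_vecI) auto
        then show False using w(2) by contradiction
      qed
      ultimately obtain r where r: "prime r" "r dvd k" using prime_divisorE by blast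
      then have "prime (nat r)" "int (nat r) = r" using prime_gt_0_int[OF r(1)] by auto
      moreover have "\<forall>i<d. r dvd w $ i" using k r(2) by (auto intro: dvd_trans)
      ultimately show False using no_prime[rule_format, of "nat r"] by simp
    qed
  qed
  then show ?thesis using w unfolding primitive_def by simp
qed (auto simp: primitive_def)

lemma primitive_iff_not_pZ_vec:
  "primitive d w \<longleftrightarrow> w \<in> carrier_vec d \<and> w \<noteq> 0\<^sub>v d \<and> (\<forall>q. prime q \<longrightarrow> \<not> pZ_vec q 1 (map_vec of_int w))"
  unfolding primitive_iff_no_prime_divisor using pZ_vec_of_int_1_iff_dvd by blast

lemma SO_Zinvp_mult_primitive:
  assumes p: "prime p" and v: "primitive d v" and c: "c \<in> SO_Zp p d" and \<gamma>: "\<gamma> \<in> SO_Zinvp p d"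
    and fixed: "padic_vec_eq p d (\<lambda>n. c n *\<^sub>v (\<gamma> *\<^sub>v map_vec of_int v)) (\<lambda>n. map_vec of_int v)"
  shows "\<exists>w. \<gamma> *\<^sub>v map_vec of_int v = map_vec of_int w \<and> primitive d w"
proof -
  have vc: "(map_vec of_int v :: rat vec) \<in> carrier_vec d"
    using v unfolding primitive_def by simp
  have \<gamma>c: "\<gamma> \<in> carrier_mat d d" using \<gamma> unfolding SO_Zinvp_def by blast
  note iff = pZ_vec_SO_Zinvp_mult_iff[OF p _ c \<gamma> vc fixed]
  have integral: "pZ_vec q 0 (\<gamma> *\<^sub>v map_vec of_int v)" if "prime q" for q
    using iff[OF that] pZ_vec_of_int[OF that] by (rule iffD2)
  from vec_of_int_if_pZ_all_primes[OF integral]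
  obtain w where w: "\<gamma> *\<^sub>v map_vec of_int v = map_vec of_int w" ..
  have wc: "w \<in> carrier_vec d"
    using arg_cong[OF w, of dim_vec] \<gamma>c by (intro carrier_vecI) simp
  have v_prim: "\<not> pZ_vec q 1 (map_vec of_int v)" if "prime q" for q
    using v that unfolding primitive_iff_not_pZ_vec by blast
  have "w \<noteq> 0\<^sub>v d"
  proof
    assume "w = 0\<^sub>v d"
    then have "pZ_vec 2 1 (map_vec of_int w)"
      using in_pZ_0[OF two_is_prime_nat] by (simp add: pZ_vec_def)
    then show False using iff[OF two_is_prime_nat] w v_prim[OF two_is_prime_nat] by simp
  qed
  moreover have "\<not> pZ_vec q 1 (map_vec of_int w)" if "prime q" for q
    using iff[OF that] w v_prim[OF that] by simp
  ultimately have "primitive d w" using wc unfolding primitive_iff_not_pZ_vec by blast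
  then show ?thesis using w by blast
qed

lemma conj_mult_mat_vec:
  fixes G :: "'a :: comm_ring_1 mat"
  assumes G: "G \<in> carrier_mat d d" and Gi: "Gi \<in> carrier_mat d d" "G * Gi = 1\<^sub>m d"
    and H: "H \<in> carrier_mat d d" and u: "u \<in> carrier_vec d"
  shows "G *\<^sub>v ((Gi * H * G) *\<^sub>v u) = H *\<^sub>v (G *\<^sub>v u)"
proof -
  have Gu: "G *\<^sub>v u \<in> carrier_vec d" and HGu: "H *\<^sub>v (G *\<^sub>v u) \<in> carrier_vec d" using G H u by auto
  have "(Gi * H * G) *\<^sub>v u = Gi *\<^sub>v (H *\<^sub>v (G *\<^sub>v u))"
    using assoc_mult_mat_vec[OF mult_carrier_mat[OF Gi(1) H] G u] assoc_mult_mat_vec[OF Gi(1) H Gu] by simp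
  then show ?thesis
    using assoc_mult_mat_vec[OF G Gi(1) HGu, symmetric] Gi(2) one_mult_mat_vec[OF HGu] by simp
qed

lemma mult_inverse_mult_col:
  fixes C :: "'a :: comm_ring_1 mat"
  assumes C: "C \<in> carrier_mat n d" and A: "A \<in> carrier_mat d d" and Ai: "Ai \<in> carrier_mat d d" "Ai * A = 1\<^sub>m d"
    and j: "j < d"
  shows "(C * Ai) *\<^sub>v col A j = col C j"
proof -
  have "Ai *\<^sub>v col A j = col (1\<^sub>m d) j"
    using col_mult2[OF Ai(1) A j] Ai(2) by simp
  moreover have "C *\<^sub>v col (1\<^sub>m d) j = col C j"
    using col_mult2[OF C one_carrier_mat j] right_mult_one_mat[OF C] by simp
  ultimately show ?thesis using assoc_mult_mat_vec[OF C Ai(1) col_carrier_vec[OF j A]] by simp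
qed

lemma padic_vec_eq_col_of_padic_factorizations:
  assumes p: "prime p" and c1: "\<And>n. c1 n \<in> carrier_mat d d" and \<gamma>1: "\<gamma>1 \<in> carrier_mat d d"
    and h: "\<And>n. h n \<in> carrier_mat d d" and G: "G \<in> carrier_mat d d" "det G \<noteq> 0"
    and c2: "\<And>n. c2 n \<in> carrier_mat d d" and \<gamma>2: "\<gamma>2 \<in> carrier_mat d d" "det \<gamma>2 \<noteq> 0"
    and E1: "padic_mat_eq p d h (\<lambda>n. c1 n * \<gamma>1)"
    and E2: "padic_mat_eq p d (\<lambda>n. mat_inv d G * h n * G) (\<lambda>n. c2 n * mat_inv d \<gamma>2)"
    and j: "j < d"
  shows "padic_vec_eq p d (\<lambda>n. c1 n *\<^sub>v col (\<gamma>1 * G * \<gamma>2) j) (\<lambda>n. G *\<^sub>v col (c2 n) j)"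
proof -
  note Gi = mat_inv_if_det_nonzero[OF G] and \<gamma>2i = mat_inv_if_det_nonzero[OF \<gamma>2]
  define u where "u = col \<gamma>2 j"
  have u: "u \<in> carrier_vec d" unfolding u_def using \<gamma>2(1) j by simp
  have Gu: "G *\<^sub>v u \<in> carrier_vec d" using G(1) u by simp
  have "padic_vec_eq p d (\<lambda>n. (mat_inv d G * h n * G) *\<^sub>v u) (\<lambda>n. (c2 n * mat_inv d \<gamma>2) *\<^sub>v u)"
    by (rule padic_vec_eq_mat_eq_mult_vec[OF p mult_carrier_mat[OF mult_carrier_mat[OF Gi(1) h] G(1)]
          mult_carrier_mat[OF c2 \<gamma>2i(1)] u E2])
  then have "padic_vec_eq p d (\<lambda>n. G *\<^sub>v ((mat_inv d G * h n * G) *\<^sub>v u))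
      (\<lambda>n. G *\<^sub>v ((c2 n * mat_inv d \<gamma>2) *\<^sub>v u))"
    by (rule padic_vec_eq_mult_mat_vec[OF p G(1) padic_bounded_mat_const[OF p]
          mult_mat_vec_carrier[OF mult_carrier_mat[OF mult_carrier_mat[OF Gi(1) h] G(1)] u]
          mult_mat_vec_carrier[OF mult_carrier_mat[OF c2 \<gamma>2i(1)] u]])
  then have hG: "padic_vec_eq p d (\<lambda>n. h n *\<^sub>v (G *\<^sub>v u)) (\<lambda>n. G *\<^sub>v col (c2 n) j)"
    unfolding u_def conj_mult_mat_vec[OF G(1) Gi(1,2) h col_carrier_vec[OF j \<gamma>2(1)]]
      mult_inverse_mult_col[OF c2 \<gamma>2(1) \<gamma>2i(1,3) j] .
  have "padic_vec_eq p d (\<lambda>n. (c1 n * \<gamma>1) *\<^sub>v (G *\<^sub>v u)) (\<lambda>n. h n *\<^sub>v (G *\<^sub>v u))"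
    by (rule padic_vec_eq_mat_eq_mult_vec[OF p mult_carrier_mat[OF c1 \<gamma>1] h Gu padic_mat_eq_sym[OF E1]])
  then have "padic_vec_eq p d (\<lambda>n. c1 n *\<^sub>v (\<gamma>1 *\<^sub>v (G *\<^sub>v u))) (\<lambda>n. G *\<^sub>v col (c2 n) j)"
    unfolding assoc_mult_mat_vec[OF c1 \<gamma>1 Gu] by (rule padic_vec_eq_trans[OF p _ hG])
  moreover have "col (\<gamma>1 * G * \<gamma>2) j = \<gamma>1 *\<^sub>v (G *\<^sub>v u)"
    unfolding u_def using col_mult2[OF mult_carrier_mat[OF \<gamma>1 G(1)] \<gamma>2(1) j]
      assoc_mult_mat_vec[OF \<gamma>1 G(1) col_carrier_vec[OF j \<gamma>2(1)]] by simp
  ultimately show ?thesis by simp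
qed

lemma pZ_mat_mult_of_padic_factorizations:
  assumes p: "prime p" and c1: "c1 \<in> SO_Zp p d" and \<gamma>1: "\<gamma>1 \<in> carrier_mat d d"
    and h: "\<And>n. h n \<in> carrier_mat d d"
    and G: "G \<in> carrier_mat d d" "det G \<noteq> 0" "pZ_mat p 0 G"
    and c2: "\<And>n. c2 n \<in> carrier_mat d d" "eventually (\<lambda>n. pZ_mat p 0 (c2 n)) sequentially"
    and \<gamma>2: "\<gamma>2 \<in> carrier_mat d d" "det \<gamma>2 \<noteq> 0"
    and E1: "padic_mat_eq p d h (\<lambda>n. c1 n * \<gamma>1)"
    and E2: "padic_mat_eq p d (\<lambda>n. mat_inv d G * h n * G) (\<lambda>n. c2 n * mat_inv d \<gamma>2)"
  shows "pZ_mat p 0 (\<gamma>1 * G * \<gamma>2)"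
  unfolding pZ_mat_iff_cols
proof (intro allI impI)
  fix j assume "j < dim_col (\<gamma>1 * G * \<gamma>2)"
  then have j: "j < d" using \<gamma>2 by simp
  have "eventually (\<lambda>n. pZ_vec p 0 (G *\<^sub>v col (c2 n) j)) sequentially"
    using c2(2)
  proof eventually_elim
    case (elim n)
    then have col_int: "pZ_vec p 0 (col (c2 n) j)" using c2(1)[of n] j by (simp add: pZ_mat_iff_cols)
    show ?case using pZ_vec_mult_mat_vec[OF p G(3) col_int] G(1) c2(1)[of n] by simp
  qed
  then show "pZ_vec p 0 (col (\<gamma>1 * G * \<gamma>2) j)"
    using pZ_vec_if_SO_Zp_mult_vec_eq[OF p c1 col_carrier_vec[OF j mult_carrier_mat[OF mult_carrier_mat[OF \<gamma>1 G(1)] \<gamma>2(1)]]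
        mult_mat_vec_carrier[OF G(1) col_carrier_vec[OF j c2(1)]]
        padic_vec_eq_col_of_padic_factorizations[OF p SO_ZpD(1)[OF c1] \<gamma>1 h G(1,2) c2(1) \<gamma>2 E1 E2 j]]
    by simp
qed

lemma first_cols_carrier [simp]: "A \<in> carrier_mat n m \<Longrightarrow> first_cols A k \<in> carrier_mat n k"
  unfolding first_cols_def by simp

lemma dim_first_cols [simp]:
  "dim_row (first_cols A k) = dim_row A" "dim_col (first_cols A k) = k"
  unfolding first_cols_def by simp_all

lemma index_first_cols [simp]: "i < dim_row A \<Longrightarrow> j < k \<Longrightarrow> first_cols A k $$ (i,j) = A $$ (i,j)"
  unfolding first_cols_def by simp

lemma col_first_cols [simp]: "j < k \<Longrightarrow> col (first_cols A k) j = col A j"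
  by (intro eq_vecI) (auto simp: col_def)

lemma first_cols_map_mat: "k \<le> dim_col A \<Longrightarrow> first_cols (map_mat f A) k = map_mat f (first_cols A k)"
  by (intro eq_matI) auto

lemma first_cols_mult_left:
  assumes "X \<in> carrier_mat n m" and "Y \<in> carrier_mat m m'" and "k \<le> m'"
  shows "first_cols (X * Y) k = X * first_cols Y k"
  using assms by (intro eq_matI) (auto simp: scalar_prod_def intro!: sum.cong)

lemma first_cols_mult_block_triangular:
  assumes X: "X \<in> carrier_mat n m" and Y: "Y \<in> carrier_mat m m'" and k: "k \<le> m" "k \<le> m'"
    and zero: "\<And>l j. k \<le> l \<Longrightarrow> l < m \<Longrightarrow> j < k \<Longrightarrow> Y $$ (l,j) = 0"
  shows "first_cols (X * Y) k = first_cols X k * mat k k (\<lambda>(i,j). Y $$ (i,j))"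
proof (rule eq_matI)
  fix i j assume "i < dim_row (first_cols X k * mat k k (\<lambda>(i,j). Y $$ (i,j)))"
    "j < dim_col (first_cols X k * mat k k (\<lambda>(i,j). Y $$ (i,j)))"
  then have ij: "i < n" "j < k" using X by auto
  have "(\<Sum>l\<in>{0..<m}. X $$ (i,l) * Y $$ (l,j)) = (\<Sum>l\<in>{0..<k}. X $$ (i,l) * Y $$ (l,j))"
    using k zero ij by (intro sum.mono_neutral_right) auto
  then show "first_cols (X * Y) k $$ (i,j) = (first_cols X k * mat k k (\<lambda>(i,j). Y $$ (i,j))) $$ (i,j)"
    using X Y k ij by (simp add: scalar_prod_def)
qed (use X in auto)

lemma det_upper_left_block:
  fixes Y :: "'a :: comm_ring_1 mat"
  assumes Y: "Y \<in> carrier_mat d d" and d: "d \<ge> 1"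
    and last_row: "\<And>j. j < d \<Longrightarrow> Y $$ (d-1, j) = (if j = d-1 then 1 else 0)"
  shows "det (mat (d-1) (d-1) (\<lambda>(i,j). Y $$ (i,j))) = det Y"
proof -
  have dd: "d - 1 < d" using d by simp
  have "det Y = (\<Sum>j<d. Y $$ (d-1,j) * cofactor Y (d-1) j)"
    by (rule laplace_expansion_row[OF Y dd])
  also have "\<dots> = (\<Sum>j<d. if j = d-1 then cofactor Y (d-1) j else 0)"
    by (rule sum.cong) (use last_row in auto)
  also have "\<dots> = cofactor Y (d-1) (d-1)"
    using dd by simp
  also have "\<dots> = det (mat_delete Y (d-1) (d-1))"
    unfolding cofactor_def by (simp flip: mult_2)
  also have "mat_delete Y (d-1) (d-1) = mat (d-1) (d-1) (\<lambda>(i,j). Y $$ (i,j))"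
    unfolding mat_delete_def using Y by (intro eq_matI) auto
  finally show ?thesis by simp
qed

lemma gram_mult_orthogonal_left:
  fixes Q :: "'a :: comm_ring_1 mat"
  assumes Q: "Q \<in> carrier_mat n n" and orth: "transpose_mat Q * Q = 1\<^sub>m n" and B: "B \<in> carrier_mat n k"
  shows "transpose_mat (Q * B) * (Q * B) = transpose_mat B * B"
proof -
  have QT: "transpose_mat Q \<in> carrier_mat n n" and BT: "transpose_mat B \<in> carrier_mat k n"
    using Q B by auto
  have "transpose_mat (Q * B) * (Q * B) = (transpose_mat B * transpose_mat Q) * (Q * B)"
    by (simp add: transpose_mult[OF Q B])
  also have "\<dots> = transpose_mat B * (transpose_mat Q * (Q * B))"
    by (rule assoc_mult_mat[OF BT QT mult_carrier_mat[OF Q B]])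
  also have "transpose_mat Q * (Q * B) = B"
    using assoc_mult_mat[OF QT Q B] orth B by simp
  finally show ?thesis .
qed

lemma det_gram_mult_right:
  fixes B :: "'a :: comm_ring_1 mat"
  assumes B: "B \<in> carrier_mat n k" and U: "U \<in> carrier_mat k k"
  shows "det (transpose_mat (B * U) * (B * U)) = det U * det U * det (transpose_mat B * B)"
proof -
  have UT: "transpose_mat U \<in> carrier_mat k k" and BT: "transpose_mat B \<in> carrier_mat k n"
    and BTB: "transpose_mat B * B \<in> carrier_mat k k"
    using U B by auto
  have "transpose_mat (B * U) * (B * U) = (transpose_mat U * transpose_mat B) * (B * U)"
    by (simp add: transpose_mult[OF B U])
  also have "\<dots> = transpose_mat U * (transpose_mat B * (B * U))"
    by (rule assoc_mult_mat[OF UT BT mult_carrier_mat[OF B U]])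
  also have "transpose_mat B * (B * U) = (transpose_mat B * B) * U"
    by (rule assoc_mult_mat[OF BT B U, symmetric])
  finally have "det (transpose_mat (B * U) * (B * U)) = det (transpose_mat U) * (det (transpose_mat B * B) * det U)"
    by (simp add: det_mult[OF UT mult_carrier_mat[OF BTB U]] det_mult[OF BTB U])
  then show ?thesis by (simp add: det_transpose[OF U])
qed

lemma col_in_zspan:
  assumes B: "B \<in> carrier_mat n k" and j: "j < k"
  shows "col B j \<in> zspan B"
proof -
  have "map_vec of_int (unit_vec k j) = (unit_vec k j :: rat vec)"
    by (intro eq_vecI) (auto simp: unit_vec_def)
  then have "B *\<^sub>v map_vec of_int (unit_vec k j) = col (B * 1\<^sub>m k) j"
    using col_mult2[OF B one_carrier_mat j] j by (simp add: col_one)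
  then have "col B j = B *\<^sub>v map_vec of_int (unit_vec k j)" using B by simp
  then show ?thesis unfolding zspan_def using B by auto
qed

lemma exists_int_mat_change_of_basis:
  assumes B: "B \<in> carrier_mat n k" and B': "B' \<in> carrier_mat n k"
    and cols: "\<And>j. j < k \<Longrightarrow> col B' j \<in> zspan B"
  shows "\<exists>U \<in> carrier_mat k k. B' = B * map_mat of_int U"
proof -
  have "\<forall>j. \<exists>c. j < k \<longrightarrow> c \<in> carrier_vec k \<and> col B' j = B *\<^sub>v map_vec of_int c"
    using cols B unfolding zspan_def by fastforce
  then obtain u where u: "\<And>j. j < k \<Longrightarrow> u j \<in> carrier_vec k \<and> col B' j = B *\<^sub>v map_vec of_int (u j)"
    by metis
  define U where "U = mat k k (\<lambda>(i,j). u j $ i)"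
  have U: "U \<in> carrier_mat k k" unfolding U_def by simp
  have "B' = B * map_mat of_int U"
  proof (rule mat_col_eqI)
    fix j assume "j < dim_col (B * map_mat of_int U)"
    then have j: "j < k" using U by simp
    have colU: "col (map_mat of_int U) j = map_vec of_int (u j)"
      using u[OF j] j unfolding U_def by (intro eq_vecI) auto
    have "col (B * map_mat of_int U) j = B *\<^sub>v col (map_mat of_int U) j"
      using B U j by (intro col_mult2) auto
    then show "col B' j = col (B * map_mat of_int U) j"
      unfolding colU using u[OF j] by simp
  qed (use B B' U in auto)
  then show ?thesis using U by blast
qed

lemma int_mat_eq_if_lattice_basis_mult_eq:
  assumes B: "B \<in> carrier_mat n k" and L: "lattice_basis B L"
    and U: "U \<in> carrier_mat k k" and V: "V \<in> carrier_mat k k"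
    and eq: "B * map_mat of_int U = B * map_mat of_int V"
  shows "U = V"
proof (rule mat_col_eqI)
  fix j assume "j < dim_col V"
  then have j: "j < k" using V by simp
  let ?c = "col U j - col V j"
  have cU: "col U j \<in> carrier_vec k" and cV: "col V j \<in> carrier_vec k" using U V j by auto
  then have c: "?c \<in> carrier_vec k" by simp
  have "map_vec of_int ?c = map_vec of_int (col U j) - (map_vec of_int (col V j) :: rat vec)"
    using cU cV U V by (intro eq_vecI) auto
  then have "B *\<^sub>v map_vec of_int ?c = B *\<^sub>v map_vec of_int (col U j) - B *\<^sub>v map_vec of_int (col V j)"
    using cU cV by (simp add: mult_minus_distrib_mat_vec[OF B])
  also have "B *\<^sub>v map_vec of_int (col U j) = col (B * map_mat of_int U) j"
    using col_mult2[OF B map_carrier_mat[THEN iffD2, OF U] j] col_map_mat[of j U of_int] U j by simp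
  also have "B *\<^sub>v map_vec of_int (col V j) = col (B * map_mat of_int V) j"
    using col_mult2[OF B map_carrier_mat[THEN iffD2, OF V] j] col_map_mat[of j V of_int] V j by simp
  finally have "B *\<^sub>v map_vec of_int ?c = 0\<^sub>v n"
    unfolding eq using B V j by simp
  then have c0: "?c = 0\<^sub>v k"
    using L c B unfolding lattice_basis_def by auto
  show "col U j = col V j"
  proof (rule eq_vecI)
    fix i assume "i < dim_vec (col V j)"
    then have i: "i < k" using V by simp
    have "?c $ i = 0" using c0 i by simp
    then show "col U j $ i = col V j $ i" using U V i j by simp
  qed (use U V in simp)
qed (use U V in auto)

lemma det_gram_lattice_basis_unique:
  assumes B: "B \<in> carrier_mat n k" and B': "B' \<in> carrier_mat n k"
    and L: "lattice_basis B L" and L': "lattice_basis B' L"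
  shows "det (transpose_mat B' * B') = det (transpose_mat B * B)"
proof -
  have same_span: "zspan B = zspan B'" using L L' unfolding lattice_basis_def by simp
  have cols_B': "col B' j \<in> zspan B" and cols_B: "col B j \<in> zspan B'" if "j < k" for j
    using col_in_zspan[OF B' that] col_in_zspan[OF B that] same_span by simp_all
  from exists_int_mat_change_of_basis[OF B B' cols_B']
  obtain U where U: "U \<in> carrier_mat k k" and BU: "B' = B * map_mat of_int U" ..
  from exists_int_mat_change_of_basis[OF B' B cols_B]
  obtain V where V: "V \<in> carrier_mat k k" and BV: "B = B' * map_mat of_int V" ..
  have "B * map_mat of_int (U * V) = (B * map_mat of_int U) * map_mat of_int V"
    using B U V by (simp add: of_int_hom.mat_hom_mult[OF U V] assoc_mult_mat[of B n k _ k _ k])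
  also have "\<dots> = B" by (simp only: BU[symmetric] BV[symmetric])
  also have "\<dots> = B * map_mat of_int (1\<^sub>m k)" using B by (simp add: of_int_hom.mat_hom_one)
  finally have "B * map_mat of_int (U * V) = B * map_mat of_int (1\<^sub>m k)" .
  then have "U * V = 1\<^sub>m k"
    using int_mat_eq_if_lattice_basis_mult_eq[OF B L] U V by simp
  then have "det U * det V = 1" using det_mult[OF U V] by simp
  then have "det U * det U = 1" using zmult_eq_1_iff by auto
  then show ?thesis
    unfolding BU using det_gram_mult_right[OF B, of "map_mat of_int U"] U
    by (simp add: of_int_hom.hom_det flip: of_int_mult)
qed

lemma covol_eq_sqrt_det_gram:
  assumes "B \<in> carrier_mat d (d-1)" and "lattice_basis B L"
  shows "covol d L = sqrt (real_of_rat (det (transpose_mat B * B)))"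
proof -
  let ?P = "\<lambda>c. \<exists>B \<in> carrier_mat d (d-1). lattice_basis B L \<and> c = sqrt (real_of_rat (det (transpose_mat B * B)))"
  have "?P (covol d L)"
    unfolding covol_def using someI[of ?P] assms by blast
  then obtain B' where "B' \<in> carrier_mat d (d-1)" "lattice_basis B' L"
    and "covol d L = sqrt (real_of_rat (det (transpose_mat B' * B')))"
    by blast
  then show ?thesis
    using det_gram_lattice_basis_unique[OF assms(1) _ assms(2)] by simp
qed

lemma first_cols_mult_vec:
  fixes A :: "'a :: comm_ring_1 mat"
  assumes A: "A \<in> carrier_mat n m" and k: "k \<le> m" and c: "c \<in> carrier_vec k"
  shows "first_cols A k *\<^sub>v c = A *\<^sub>v vec m (\<lambda>i. if i < k then c $ i else 0)"
proof (rule eq_vecI)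
  fix i assume "i < dim_vec (A *\<^sub>v vec m (\<lambda>i. if i < k then c $ i else 0))"
  then have i: "i < n" using A by simp
  have "(\<Sum>l\<in>{0..<m}. A $$ (i,l) * (if l < k then c $ l else 0)) = (\<Sum>l\<in>{0..<k}. A $$ (i,l) * c $ l)"
    using k by (intro sum.mono_neutral_cong_right) auto
  then show "(first_cols A k *\<^sub>v c) $ i = (A *\<^sub>v vec m (\<lambda>i. if i < k then c $ i else 0)) $ i"
    using A c i k by (simp add: scalar_prod_def)
qed (use A in simp)

lemma of_int_first_cols_mult_vec:
  assumes M: "M \<in> carrier_mat n m" and k: "k \<le> m" and c: "c \<in> carrier_vec k"
  shows "map_mat of_int (first_cols M k) *\<^sub>v map_vec of_int c
    = (map_vec of_int (M *\<^sub>v vec m (\<lambda>i. if i < k then c $ i else 0)) :: 'a :: comm_ring_1 vec)"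
  using of_int_hom.mult_mat_vec_hom[OF first_cols_carrier[OF M] c, symmetric]
  unfolding first_cols_mult_vec[OF M k c] .

lemma zspan_first_cols_of_int:
  assumes M: "M \<in> carrier_mat n d" and d: "d \<ge> 1"
  shows "zspan (map_mat of_int (first_cols M (d-1)))
    = {map_vec of_int (M *\<^sub>v y) | y. y \<in> carrier_vec d \<and> y $ (d-1) = 0}"
proof -
  define ext where "ext c = vec d (\<lambda>i. if i < d-1 then c $ i else 0)" for c :: "int vec"
  have span_ext: "map_mat of_int (first_cols M (d-1)) *\<^sub>v map_vec of_int c = (map_vec of_int (M *\<^sub>v ext c) :: rat vec)"
    if "c \<in> carrier_vec (d-1)" for c
    unfolding ext_def by (rule of_int_first_cols_mult_vec[OF M diff_le_self that])
  show ?thesis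
  proof (intro equalityI subsetI)
    fix z assume "z \<in> zspan (map_mat of_int (first_cols M (d-1)))"
    then obtain c where c: "c \<in> carrier_vec (d-1)" and z: "z = map_mat of_int (first_cols M (d-1)) *\<^sub>v map_vec of_int c"
      unfolding zspan_def by auto
    have "ext c \<in> carrier_vec d" "ext c $ (d-1) = 0" using d unfolding ext_def by auto
    then show "z \<in> {map_vec of_int (M *\<^sub>v y) | y. y \<in> carrier_vec d \<and> y $ (d-1) = 0}"
      unfolding z span_ext[OF c] by blast
  next
    fix z :: "rat vec" assume "z \<in> {map_vec of_int (M *\<^sub>v y) | y. y \<in> carrier_vec d \<and> y $ (d-1) = 0}"
    then obtain y where y: "y \<in> carrier_vec d" "y $ (d-1) = 0" and z: "z = map_vec of_int (M *\<^sub>v y)"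
      by blast
    define c where "c = vec (d-1) (\<lambda>i. y $ i)"
    have c: "c \<in> carrier_vec (d-1)" unfolding c_def by simp
    have "i = d-1" if "i < d" "\<not> i < d-1" for i using that by linarith
    then have "ext c = y"
      unfolding ext_def c_def using y by (intro eq_vecI) auto
    then have "z = map_mat of_int (first_cols M (d-1)) *\<^sub>v map_vec of_int c"
      unfolding z span_ext[OF c] by simp
    then show "z \<in> zspan (map_mat of_int (first_cols M (d-1)))"
      unfolding zspan_def using c by auto
  qed
qed

lemma dim_vec_ge_1_if_nonzero: "w \<in> carrier_vec d \<Longrightarrow> w \<noteq> 0\<^sub>v d \<Longrightarrow> d \<ge> 1"
  by (cases d) auto

lemma transpose_mult_vec_eq_0_if_first_cols_orthogonal:
  assumes M: "M \<in> carrier_mat d d" and orth: "transpose_mat (first_cols M (d-1)) *\<^sub>v w = 0\<^sub>v (d-1)"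
    and j: "j < d-1"
  shows "(transpose_mat M *\<^sub>v w) $ j = 0"
proof -
  have "(transpose_mat M *\<^sub>v w) $ j = (transpose_mat (first_cols M (d-1)) *\<^sub>v w) $ j" using M j by simp
  also have "\<dots> = 0" unfolding orth using j by simp
  finally show ?thesis .
qed

lemma transpose_mult_vec_last_nonzero:
  fixes M :: "'a :: idom mat"
  assumes M: "M \<in> carrier_mat d d" and det: "det M \<noteq> 0" and w: "w \<in> carrier_vec d" "w \<noteq> 0\<^sub>v d"
    and init: "\<And>j. j < d-1 \<Longrightarrow> (transpose_mat M *\<^sub>v w) $ j = 0"
  shows "(transpose_mat M *\<^sub>v w) $ (d-1) \<noteq> 0"
proof
  assume last: "(transpose_mat M *\<^sub>v w) $ (d-1) = 0"
  have "transpose_mat M *\<^sub>v w = 0\<^sub>v d"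
  proof (rule eq_vecI)
    fix l assume "l < dim_vec (0\<^sub>v d :: 'a vec)"
    then have "l < d-1 \<or> l = d-1" "l < d" by auto
    then show "(transpose_mat M *\<^sub>v w) $ l = 0\<^sub>v d $ l" using init last by auto
  qed (use M in simp)
  then have "det (transpose_mat M) = 0" using det_0_iff_vec_prod_zero[of "transpose_mat M" d] M w by auto
  then show False using det det_transpose[OF M] by simp
qed

lemma scalar_prod_mult_vec_last_coord:
  fixes M :: "'a :: comm_ring_1 mat"
  assumes M: "M \<in> carrier_mat d d" and w: "w \<in> carrier_vec d" and y: "y \<in> carrier_vec d" and d: "d \<ge> 1"
    and init: "\<And>j. j < d-1 \<Longrightarrow> (transpose_mat M *\<^sub>v w) $ j = 0"
  shows "(M *\<^sub>v y) \<bullet> w = y $ (d-1) * (transpose_mat M *\<^sub>v w) $ (d-1)"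
proof -
  have "(M *\<^sub>v y) \<bullet> w = (transpose_mat M *\<^sub>v w) \<bullet> y"
    using transpose_vec_mult_scalar[OF M y w] comm_scalar_prod[OF mult_mat_vec_carrier[OF M y] w] by simp
  also have "\<dots> = (\<Sum>l\<in>{0..<d}. (transpose_mat M *\<^sub>v w) $ l * y $ l)" using y by (simp add: scalar_prod_def)
  also have "\<dots> = (\<Sum>l\<in>{d-1}. (transpose_mat M *\<^sub>v w) $ l * y $ l)"
  proof (rule sum.mono_neutral_right)
    show "\<forall>i\<in>{0..<d} - {d-1}. (transpose_mat M *\<^sub>v w) $ i * y $ i = 0"
    proof
      fix i assume "i \<in> {0..<d} - {d-1}"
      then have "i < d-1" by auto
      then show "(transpose_mat M *\<^sub>v w) $ i * y $ i = 0" using init by simp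
    qed
  qed (use d in auto)
  finally show ?thesis by (simp add: mult.commute)
qed

lemma Lambda_eq_image_last_coord_zero:
  assumes M: "M \<in> carrier_mat d d" and det: "det M = 1" and w: "w \<in> carrier_vec d" "w \<noteq> 0\<^sub>v d"
    and orth: "transpose_mat (first_cols M (d-1)) *\<^sub>v w = 0\<^sub>v (d-1)"
  shows "Lambda d w = {map_vec of_int (M *\<^sub>v y) | y. y \<in> carrier_vec d \<and> y $ (d-1) = 0}"
proof -
  note init = transpose_mult_vec_eq_0_if_first_cols_orthogonal[OF M orth]
  note prod = scalar_prod_mult_vec_last_coord[OF M w(1) _ dim_vec_ge_1_if_nonzero[OF w] init]
  have last: "(transpose_mat M *\<^sub>v w) $ (d-1) \<noteq> 0"
    using transpose_mult_vec_last_nonzero[OF M _ w init] det by simp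
  show ?thesis
  proof (intro equalityI subsetI)
    fix z :: "rat vec" assume "z \<in> Lambda d w"
    then obtain x where x: "x \<in> carrier_vec d" "x \<bullet> w = 0" and z: "z = map_vec of_int x"
      unfolding Lambda_def by blast
    define y where "y = adj_mat M *\<^sub>v x"
    have y: "y \<in> carrier_vec d" unfolding y_def using adj_mat(1)[OF M] x(1) by simp
    have "M *\<^sub>v y = (M * adj_mat M) *\<^sub>v x"
      unfolding y_def using assoc_mult_mat_vec[OF M adj_mat(1)[OF M] x(1)] by simp
    also have "M * adj_mat M = 1\<^sub>m d"
      using adj_mat(2)[OF M] unfolding det by (intro eq_matI) auto
    finally have My: "M *\<^sub>v y = x" using x(1) by simp
    then have "y $ (d-1) = 0" using prod[OF y] x(2) last by simp
    then show "z \<in> {map_vec of_int (M *\<^sub>v y) | y. y \<in> carrier_vec d \<and> y $ (d-1) = 0}"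
      using y My z by blast
  next
    fix z :: "rat vec" assume "z \<in> {map_vec of_int (M *\<^sub>v y) | y. y \<in> carrier_vec d \<and> y $ (d-1) = 0}"
    then obtain y where y: "y \<in> carrier_vec d" "y $ (d-1) = 0" and z: "z = map_vec of_int (M *\<^sub>v y)"
      by blast
    have "(M *\<^sub>v y) \<bullet> w = 0" using prod[OF y(1)] y(2) by simp
    then show "z \<in> Lambda d w"
      unfolding Lambda_def using z mult_mat_vec_carrier[OF M y(1)] by blast
  qed
qed

lemma lattice_basis_first_cols_Lambda:
  assumes M: "M \<in> carrier_mat d d" and det: "det M = 1" and w: "w \<in> carrier_vec d" "w \<noteq> 0\<^sub>v d"
    and orth: "transpose_mat (first_cols M (d-1)) *\<^sub>v w = 0\<^sub>v (d-1)"
  shows "lattice_basis (map_mat of_int (first_cols M (d-1))) (Lambda d w)"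
  unfolding lattice_basis_def
proof (intro conjI ballI impI)
  have d: "d \<ge> 1" using dim_vec_ge_1_if_nonzero[OF w] .
  show "zspan (map_mat of_int (first_cols M (d-1))) = Lambda d w"
    using zspan_first_cols_of_int[OF M d] Lambda_eq_image_last_coord_zero[OF assms] by simp
  fix c assume "c \<in> carrier_vec (dim_col (map_mat of_int (first_cols M (d-1)) :: rat mat))"
    and zero: "map_mat of_int (first_cols M (d-1)) *\<^sub>v map_vec of_int c
      = (0\<^sub>v (dim_row (map_mat of_int (first_cols M (d-1)) :: rat mat)) :: rat vec)"
  then have c: "c \<in> carrier_vec (d-1)" by simp
  let ?e = "vec d (\<lambda>i. if i < d-1 then c $ i else 0)"
  have "(map_vec of_int (M *\<^sub>v ?e) :: rat vec) = 0\<^sub>v d"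
    using zero of_int_first_cols_mult_vec[OF M diff_le_self c, where 'a=rat] M by simp
  then have "M *\<^sub>v ?e = 0\<^sub>v d" by (rule of_int_hom.vec_hom_zero_iff[THEN iffD1])
  moreover have "\<not> (\<exists>v. v \<in> carrier_vec d \<and> v \<noteq> 0\<^sub>v d \<and> M *\<^sub>v v = 0\<^sub>v d)"
    using det_0_iff_vec_prod_zero[OF M] det by simp
  ultimately have e0: "?e = 0\<^sub>v d" using vec_carrier by blast
  show "c = 0\<^sub>v (dim_col (map_mat of_int (first_cols M (d-1)) :: rat mat))"
  proof (rule eq_vecI)
    fix i assume "i < dim_vec (0\<^sub>v (dim_col (map_mat of_int (first_cols M (d-1)) :: rat mat)) :: int vec)"
    then have i: "i < d-1" by simp
    have "?e $ i = 0" unfolding e0 using i by simp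
    then show "c $ i = 0\<^sub>v (dim_col (map_mat of_int (first_cols M (d-1)) :: rat mat)) $ i"
      using i by simp
  qed (use c in simp)
qed

lemma first_cols_mult_last_row_unit:
  assumes X: "X \<in> carrier_mat n d" and Y: "Y \<in> carrier_mat d d"
    and last_row: "\<forall>j<d. Y $$ (d-1, j) = (if j = d-1 then 1 else 0)"
  shows "first_cols (X * Y) (d-1) = first_cols X (d-1) * mat (d-1) (d-1) (\<lambda>(i,j). Y $$ (i,j))"
proof (rule first_cols_mult_block_triangular[OF X Y])
  fix l j assume "d - 1 \<le> l" "l < d" "j < d - 1"
  then have "l = d - 1" "j < d" "j \<noteq> d - 1" by linarith+
  then show "Y $$ (l,j) = 0" using last_row by simp
qed auto

lemma scalar_prod_of_int:
  assumes "x \<in> carrier_vec n" "y \<in> carrier_vec n"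
  shows "map_vec of_int x \<bullet> map_vec of_int y = (of_int (x \<bullet> y) :: 'a :: comm_ring_1)"
  using assms by (simp add: scalar_prod_def of_int_hom.hom_sum)

lemma transpose_mult_vec_eq_0_if_zspan_Lambda:
  assumes B: "B \<in> carrier_mat d k" and span: "zspan B = Lambda d v" and v: "v \<in> carrier_vec d"
  shows "transpose_mat B *\<^sub>v map_vec of_int v = 0\<^sub>v k"
proof (rule eq_vecI)
  fix j assume "j < dim_vec (0\<^sub>v k :: rat vec)"
  then have j: "j < k" by simp
  obtain x where x: "col B j = map_vec of_int x" "x \<in> carrier_vec d" "x \<bullet> v = 0"
    using col_in_zspan[OF B j] unfolding span Lambda_def by blast
  have "(transpose_mat B *\<^sub>v map_vec of_int v) $ j = col B j \<bullet> map_vec of_int v"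
    using B j by simp
  also have "\<dots> = 0" unfolding x(1) scalar_prod_of_int[OF x(2) v] x(3) by simp
  finally show "(transpose_mat B *\<^sub>v map_vec of_int v) $ j = 0\<^sub>v k $ j" using j by simp
qed (use B in simp)

lemma transpose_mult_orthogonal_mult_vec:
  fixes Q :: "'a :: comm_ring_1 mat"
  assumes Q: "Q \<in> carrier_mat n n" and orth: "transpose_mat Q * Q = 1\<^sub>m n"
    and C: "C \<in> carrier_mat n k" and x: "x \<in> carrier_vec n"
  shows "transpose_mat (Q * C) *\<^sub>v (Q *\<^sub>v x) = transpose_mat C *\<^sub>v x"
proof -
  have QT: "transpose_mat Q \<in> carrier_mat n n" and CT: "transpose_mat C \<in> carrier_mat k n"
    and Qx: "Q *\<^sub>v x \<in> carrier_vec n" using Q C x by auto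
  have "transpose_mat (Q * C) *\<^sub>v (Q *\<^sub>v x) = (transpose_mat C * transpose_mat Q) *\<^sub>v (Q *\<^sub>v x)"
    by (simp add: transpose_mult[OF Q C])
  also have "\<dots> = transpose_mat C *\<^sub>v ((transpose_mat Q * Q) *\<^sub>v x)"
    using assoc_mult_mat_vec[OF CT QT Qx] assoc_mult_mat_vec[OF QT Q x] by simp
  finally show ?thesis using orth x by simp
qed

lemma first_cols_rotated_mult_last_row_unit:
  assumes Q: "Q \<in> carrier_mat n n" and G: "G \<in> carrier_mat n d" and Y: "Y \<in> carrier_mat d d"
    and last_row: "\<forall>j<d. Y $$ (d-1, j) = (if j = d-1 then 1 else 0)"
  shows "first_cols (Q * G * Y) (d-1) = Q * (first_cols G (d-1) * mat (d-1) (d-1) (\<lambda>(i,j). Y $$ (i,j)))"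
proof -
  have "first_cols (Q * G * Y) (d-1) = (Q * first_cols G (d-1)) * mat (d-1) (d-1) (\<lambda>(i,j). Y $$ (i,j))"
    using first_cols_mult_last_row_unit[OF mult_carrier_mat[OF Q G] Y last_row]
      first_cols_mult_left[OF Q G, of "d-1"] by simp
  then show ?thesis
    using assoc_mult_mat[OF Q first_cols_carrier[OF G] mat_carrier] by simp
qed

lemma lattice_basis_first_cols_rotated:
  assumes Q: "Q \<in> carrier_mat d d" "transpose_mat Q * Q = 1\<^sub>m d" "det Q = 1"
    and G: "G \<in> carrier_mat d d" "det G = 1" and span: "zspan (first_cols G (d-1)) = Lambda d v"
    and Y: "Y \<in> carrier_mat d d" "\<forall>j<d. Y $$ (d-1, j) = (if j = d-1 then 1 else 0)" "det Y = 1"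
    and M: "Q * G * Y = map_mat of_int M"
    and v: "v \<in> carrier_vec d" and w: "Q *\<^sub>v map_vec of_int v = map_vec of_int w" "w \<noteq> 0\<^sub>v d"
  shows "lattice_basis (first_cols (Q * G * Y) (d-1)) (Lambda d w)"
proof -
  let ?B = "first_cols G (d-1)" and ?A = "mat (d-1) (d-1) (\<lambda>(i,j). Y $$ (i,j))"
  have B: "?B \<in> carrier_mat d (d-1)" and A: "?A \<in> carrier_mat (d-1) (d-1)" using G by auto
  have Mc: "M \<in> carrier_mat d d" using arg_cong[OF M, of dim_row] arg_cong[OF M, of dim_col] Q G Y
    by (intro carrier_matI) auto
  have wc: "w \<in> carrier_vec d" using arg_cong[OF w(1), of dim_vec] Q by (intro carrier_vecI) simp
  have "transpose_mat (first_cols (Q * G * Y) (d-1)) *\<^sub>v map_vec of_int w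
      = transpose_mat (?B * ?A) *\<^sub>v map_vec of_int v"
    unfolding first_cols_rotated_mult_last_row_unit[OF Q(1) G(1) Y(1,2)] w(1)[symmetric]
    using transpose_mult_orthogonal_mult_vec[OF Q(1,2) mult_carrier_mat[OF B A]] v by simp
  also have "\<dots> = transpose_mat ?A *\<^sub>v (transpose_mat ?B *\<^sub>v map_vec of_int v)"
    using transpose_mult[OF B A] assoc_mult_mat_vec[of "transpose_mat ?A" "d-1" "d-1" "transpose_mat ?B" d] B A v
    by simp
  also have "\<dots> = 0\<^sub>v (d-1)"
    unfolding transpose_mult_vec_eq_0_if_zspan_Lambda[OF B span v] using A by auto
  finally have orth: "transpose_mat (first_cols (Q * G * Y) (d-1)) *\<^sub>v map_vec of_int w = 0\<^sub>v (d-1)" .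
  have fcM: "first_cols (Q * G * Y) (d-1) = map_mat of_int (first_cols M (d-1))"
    unfolding M using Mc by (simp add: first_cols_map_mat)
  have "map_vec of_int (transpose_mat (first_cols M (d-1)) *\<^sub>v w)
      = map_mat of_int (transpose_mat (first_cols M (d-1))) *\<^sub>v (map_vec of_int w :: rat vec)"
    using Mc wc by (intro of_int_hom.mult_mat_vec_hom) auto
  also have "\<dots> = 0\<^sub>v (d-1)"
    using orth unfolding fcM by (simp add: map_mat_transpose)
  finally have "transpose_mat (first_cols M (d-1)) *\<^sub>v w = 0\<^sub>v (d-1)"
    by (rule of_int_hom.vec_hom_zero_iff[THEN iffD1])
  moreover have "det M = 1"
    using arg_cong[OF M, of det] Q G Y by (simp add: det_mult[of _ d] of_int_hom.hom_det)
  ultimately have "lattice_basis (map_mat of_int (first_cols M (d-1))) (Lambda d w)"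
    using lattice_basis_first_cols_Lambda[OF Mc _ wc w(2)] by simp
  then show ?thesis unfolding fcM .
qed

lemma covol_first_cols_rotated:
  assumes Q: "Q \<in> carrier_mat d d" "transpose_mat Q * Q = 1\<^sub>m d" and G: "G \<in> carrier_mat d d"
    and Y: "Y \<in> carrier_mat d d" "\<forall>j<d. Y $$ (d-1, j) = (if j = d-1 then 1 else 0)" "det Y = 1"
    and d: "d \<ge> 1"
    and L': "lattice_basis (first_cols (Q * G * Y) (d-1)) L'" and L: "lattice_basis (first_cols G (d-1)) L"
  shows "covol d L' = covol d L"
proof -
  let ?B = "first_cols G (d-1)" and ?A = "mat (d-1) (d-1) (\<lambda>(i,j). Y $$ (i,j))"
  have B: "?B \<in> carrier_mat d (d-1)" and A: "?A \<in> carrier_mat (d-1) (d-1)" using G by auto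
  have "det ?A = 1" using det_upper_left_block[OF Y(1) d] Y(2,3) by simp
  then have "det (transpose_mat (Q * (?B * ?A)) * (Q * (?B * ?A))) = det (transpose_mat ?B * ?B)"
    unfolding gram_mult_orthogonal_left[OF Q mult_carrier_mat[OF B A]] det_gram_mult_right[OF B A]
    by simp
  then show ?thesis
    using covol_eq_sqrt_det_gram[OF _ L'] covol_eq_sqrt_det_gram[OF B L] Q(1) B A
    unfolding first_cols_rotated_mult_last_row_unit[OF Q(1) G Y(1,2)] by simp
qed

lemma padic_vec_eq_fixed_of_H_Qp:
  assumes p: "prime p" and h: "h \<in> H_Qp p d v" and c: "\<And>n. c n \<in> carrier_mat d d"
    and \<gamma>: "\<gamma> \<in> carrier_mat d d" and E: "padic_mat_eq p d h (\<lambda>n. c n * \<gamma>)" and v: "v \<in> carrier_vec d"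
  shows "padic_vec_eq p d (\<lambda>n. c n *\<^sub>v (\<gamma> *\<^sub>v map_vec of_int v)) (\<lambda>n. map_vec of_int v)"
proof -
  have hc: "h n \<in> carrier_mat d d" for n
    using h unfolding H_Qp_def SO_Qp_def padic_mat_def by blast
  have hv: "padic_vec_eq p d (\<lambda>n. h n *\<^sub>v map_vec of_int v) (\<lambda>n. map_vec of_int v)"
    using h unfolding H_Qp_def by blast
  have vc: "(map_vec of_int v :: rat vec) \<in> carrier_vec d" using v by simp
  have "padic_vec_eq p d (\<lambda>n. (c n * \<gamma>) *\<^sub>v map_vec of_int v) (\<lambda>n. h n *\<^sub>v map_vec of_int v)"
    by (rule padic_vec_eq_mat_eq_mult_vec[OF p mult_carrier_mat[OF c \<gamma>] hc vc padic_mat_eq_sym[OF E]])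
  then have "padic_vec_eq p d (\<lambda>n. c n *\<^sub>v (\<gamma> *\<^sub>v map_vec of_int v)) (\<lambda>n. h n *\<^sub>v map_vec of_int v)"
    by (simp only: assoc_mult_mat_vec[OF c \<gamma> vc])
  then show ?thesis by (rule padic_vec_eq_trans[OF p _ hv])
qed

lemma int_mat_of_padic_factorizations:
  assumes p: "prime p" and h: "\<And>n. h n \<in> carrier_mat d d"
    and c1: "c1 \<in> SO_Zp p d" and \<gamma>1: "\<gamma>1 \<in> SO_Zinvp p d" and E1: "padic_mat_eq p d h (\<lambda>n. c1 n * \<gamma>1)"
    and g: "g \<in> carrier_mat d d" "det g = 1"
    and c2: "c2 \<in> ASL_Zp p d" and \<gamma>2: "\<gamma>2 \<in> ASL_Zinvp p d"
    and E2: "padic_mat_eq p d (\<lambda>n. mat_inv d (map_mat of_int g) * h n * map_mat of_int g)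
      (\<lambda>n. c2 n * mat_inv d \<gamma>2)"
  shows "\<exists>M. \<gamma>1 * map_mat of_int g * \<gamma>2 = map_mat of_int M"
proof (rule mat_of_int_if_pZ_all_primes)
  fix q :: nat assume q: "prime q"
  let ?G = "map_mat of_int g :: rat mat"
  have G: "?G \<in> carrier_mat d d" "det ?G \<noteq> 0" "pZ_mat q 0 ?G"
    using g pZ_mat_of_int[OF q] by (auto simp: of_int_hom.hom_det)
  have \<gamma>1c: "\<gamma>1 \<in> carrier_mat d d" and \<gamma>1Z: "\<forall>i<d. \<forall>j<d. in_Zinvp p (\<gamma>1 $$ (i,j))"
    using \<gamma>1 unfolding SO_Zinvp_def by auto
  have \<gamma>2c: "\<gamma>2 \<in> carrier_mat d d" "det \<gamma>2 \<noteq> 0" and \<gamma>2Z: "\<forall>i<d. \<forall>j<d. in_Zinvp p (\<gamma>2 $$ (i,j))"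
    using \<gamma>2 unfolding ASL_Zinvp_def by auto
  show "pZ_mat q 0 (\<gamma>1 * ?G * \<gamma>2)"
  proof (cases "q = p")
    case True
    have c2c: "c2 n \<in> carrier_mat d d" for n
      using c2 unfolding ASL_Zp_def padic_mat_def by blast
    have "eventually (\<lambda>n. pZ_mat p 0 (c2 n)) sequentially"
      using c2 c2c unfolding ASL_Zp_def by (intro eventually_pZ_mat_if_padic_integral) auto
    then show ?thesis
      unfolding True using pZ_mat_mult_of_padic_factorizations[OF p c1 \<gamma>1c h G[unfolded True] c2c _ \<gamma>2c E1 E2]
      by simp
  next
    case False
    have \<gamma>1q: "pZ_mat q 0 \<gamma>1" and \<gamma>2q: "pZ_mat q 0 \<gamma>2"
      using pZ_mat_if_in_Zinvp[OF p q False] \<gamma>1c \<gamma>1Z \<gamma>2c \<gamma>2Z by auto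
    have \<gamma>1G: "pZ_mat q 0 (\<gamma>1 * ?G)" using pZ_mat_mult[OF q \<gamma>1q G(3)] \<gamma>1c G(1) by simp
    show ?thesis using pZ_mat_mult[OF q \<gamma>1G \<gamma>2q] \<gamma>1c \<gamma>2c G(1) by simp
  qed
qed

theorem corollary3p3:
  fixes d p :: nat and v :: "int vec" and g :: "int mat"
    and h c1 c2 :: "nat \<Rightarrow> rat mat" and \<gamma>1 \<gamma>2 :: "rat mat"
  assumes "prime p"
    and "primitive d v"
    and "is_gv d v g"
    and "h \<in> H_Qp p d v"
    and "c1 \<in> SO_Zp p d" and "\<gamma>1 \<in> SO_Zinvp p d"
    and "padic_mat_eq p d h (\<lambda>n. c1 n * \<gamma>1)"
    and "c2 \<in> ASL_Zp p d" and "\<gamma>2 \<in> ASL_Zinvp p d"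
    and "padic_mat_eq p d
           (\<lambda>n. mat_inv d (map_mat of_int g) * h n * map_mat of_int g)
           (\<lambda>n. c2 n * mat_inv d \<gamma>2)"
  shows "\<exists>w. \<gamma>1 *\<^sub>v map_vec of_int v = map_vec of_int w \<and> primitive d w \<and>
           zspan (first_cols (\<gamma>1 * map_mat of_int g * \<gamma>2) (d-1)) = Lambda d w \<and>
           covol d (zspan (first_cols (\<gamma>1 * map_mat of_int g * \<gamma>2) (d-1)))
             = covol d (Lambda d v)"
proof -
  let ?G = "map_mat of_int g :: rat mat"
  let ?B = "first_cols (\<gamma>1 * ?G * \<gamma>2) (d-1)"
  have v: "v \<in> carrier_vec d" "v \<noteq> 0\<^sub>v d" using assms(2) unfolding primitive_def by auto
  have g: "g \<in> carrier_mat d d" "det g = 1" and G_basis: "lattice_basis (first_cols ?G (d-1)) (Lambda d v)"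
    using assms(3) unfolding is_gv_def by auto
  have G: "?G \<in> carrier_mat d d" "det ?G = 1" using g by (auto simp: of_int_hom.hom_det)
  have \<gamma>1: "\<gamma>1 \<in> carrier_mat d d" "transpose_mat \<gamma>1 * \<gamma>1 = 1\<^sub>m d" "det \<gamma>1 = 1"
    using assms(6) unfolding SO_Zinvp_def by auto
  have \<gamma>2: "\<gamma>2 \<in> carrier_mat d d" "\<forall>j<d. \<gamma>2 $$ (d-1, j) = (if j = d-1 then 1 else 0)" "det \<gamma>2 = 1"
    using assms(9) unfolding ASL_Zinvp_def by auto
  have h: "h n \<in> carrier_mat d d" for n
    using assms(4) unfolding H_Qp_def SO_Qp_def padic_mat_def by blast
  obtain w where w: "\<gamma>1 *\<^sub>v map_vec of_int v = map_vec of_int w" "primitive d w"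
    using SO_Zinvp_mult_primitive[OF assms(1,2,5,6) padic_vec_eq_fixed_of_H_Qp[OF assms(1,4)
        SO_ZpD(1)[OF assms(5)] \<gamma>1(1) assms(7) v(1)]] by blast
  obtain M where M: "\<gamma>1 * ?G * \<gamma>2 = map_mat of_int M"
    using int_mat_of_padic_factorizations[OF assms(1) h assms(5-7) g assms(8-10)] by blast
  have basis: "lattice_basis ?B (Lambda d w)"
    using lattice_basis_first_cols_rotated[OF \<gamma>1 G _ \<gamma>2 M v(1) w(1)] G_basis w(2)
    unfolding lattice_basis_def primitive_def by blast
  moreover have "covol d (Lambda d w) = covol d (Lambda d v)"
    by (rule covol_first_cols_rotated[OF \<gamma>1(1,2) G(1) \<gamma>2 dim_vec_ge_1_if_nonzero[OF v] basis G_basis])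
  ultimately show ?thesis using w unfolding lattice_basis_def by auto
qed

end
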